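(* Let $a,b>-2$ and let $N\ge2$ be even. For $j\ge0$ put $$\varphi_j^{(1)}(x)=\frac{P_j^{(a+1,b+1)}(x)}{\sqrt{h_j^{(a+1,b+1)}}}(1-x)^{a/2}(1+x)^{b/2},\qquad x\in(-1,1),$$ and define $\psi_{2j}^{(1)}(x)=\varphi_{2j}^{(1)}(x)$, $\psi_{2j+1}^{(1)}(x)=\frac{d}{dx}\big[(1-x^2)\varphi_{2j}^{(1)}(x)\big]$. Let $M^{(1)}$ be the $N\times N$ matrix with entries $M^{(1)}_{jk}=\int_{-1}^1\psi_j^{(1)}(x)\,\varepsilon\psi_k^{(1)}(x)\,dx$, $j,k=0,\ldots,N-1$, let $(\nu_{jk})_{j,k=0}^{N-1}=(M^{(1)})^{-1}$, and $$K_N^{(1)}(x,y)=\sum_{j,k=0}^{N-1}\nu_{jk}\,\varepsilon\psi_j^{(1)}(x)\,\psi_k^{(1)}(y).$$ Then $$K_N^{(1)}(x,y)=S_N^{(1)}(x,y)+C_N^{(1)}\,\varepsilon\varphi_N^{(1)}(x)\,\varphi_{N-1}^{(1)}(y),$$ where $$C_N^{(1)}=\sqrt{\frac{N(N+a+1)(N+b+1)(N+a+b+2)}{(2N+a+b+1)(2N+a+b+3)}},\qquad S_N^{(1)}(x,y)=\sum_{j=0}^{N-1}(1-x^2)\varphi_j^{(1)}(x)\varphi_j^{(1)}(y).$$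
   Context: $P_j^{(\alpha,\beta)}$ is the Jacobi polynomial of degree $j$ (Szegő normalization) with $\int_{-1}^1P_j^{(\alpha,\beta)}P_k^{(\alpha,\beta)}(1-x)^{\alpha}(1+x)^{\beta}dx=h_j^{(\alpha,\beta)}\delta_{jk}$, $h_j^{(\alpha,\beta)}=\frac{2^{\alpha+\beta+1}\Gamma(j+\alpha+1)\Gamma(j+\beta+1)}{j!(2j+\alpha+\beta+1)\Gamma(j+\alpha+\beta+1)}$. The operator $\varepsilon$ acts on integrable $g$ on $[-1,1]$ by $\varepsilon g(x)=\int_{-1}^1\frac12\mathrm{sgn}(x-y)g(y)dy=\frac12\left(\int_{-1}^x g(y)dy-\int_x^1 g(y)dy\right)$. *)

theory Defs
  imports "HOL-Analysis.Analysis"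
begin

text \<open>Jacobi polynomial, Szego normalization (explicit sum, DLMF 18.5.8).\<close>
definition jacobiP :: "nat \<Rightarrow> real \<Rightarrow> real \<Rightarrow> real \<Rightarrow> real" where
  "jacobiP n \<alpha> \<beta> x =
     (\<Sum>s\<le>n. ((real n + \<alpha>) gchoose (n - s)) * ((real n + \<beta>) gchoose s)
              * ((x - 1) / 2) ^ s * ((x + 1) / 2) ^ (n - s))"

definition jacobi_weight :: "real \<Rightarrow> real \<Rightarrow> real \<Rightarrow> real" where
  "jacobi_weight \<alpha> \<beta> x = (1 - x) powr \<alpha> * (1 + x) powr \<beta>"

definition jacobi_h :: "nat \<Rightarrow> real \<Rightarrow> real \<Rightarrow> real" where
  "jacobi_h j \<alpha> \<beta> = integral {-1..1} (\<lambda>x. (jacobiP j \<alpha> \<beta> x)^2 * jacobi_weight \<alpha> \<beta> x)"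

definition eps_op :: "(real \<Rightarrow> real) \<Rightarrow> real \<Rightarrow> real" where
  "eps_op g x = integral {-1..1} (\<lambda>y. (1/2) * sgn (x - y) * g y)"

definition phi1 :: "real \<Rightarrow> real \<Rightarrow> nat \<Rightarrow> real \<Rightarrow> real" where
  "phi1 a b j x = jacobiP j (a + 1) (b + 1) x / sqrt (jacobi_h j (a + 1) (b + 1))
                    * (1 - x) powr (a / 2) * (1 + x) powr (b / 2)"

definition psi1 :: "real \<Rightarrow> real \<Rightarrow> nat \<Rightarrow> real \<Rightarrow> real" where
  "psi1 a b j x = (if even j then phi1 a b j x
                   else deriv (\<lambda>t. (1 - t^2) * phi1 a b (j - 1) t) x)"

definition M1 :: "real \<Rightarrow> real \<Rightarrow> nat \<Rightarrow> nat \<Rightarrow> real" where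
  "M1 a b j k = integral {-1..1} (\<lambda>x. psi1 a b j x * eps_op (psi1 a b k) x)"

definition is_inverse_mat :: "nat \<Rightarrow> (nat \<Rightarrow> nat \<Rightarrow> real) \<Rightarrow> (nat \<Rightarrow> nat \<Rightarrow> real) \<Rightarrow> bool" where
  "is_inverse_mat N M \<nu> \<longleftrightarrow>
     (\<forall>j<N. \<forall>k<N. (\<Sum>l<N. M j l * \<nu> l k) = (if j = k then 1 else 0)) \<and>
     (\<forall>j<N. \<forall>k<N. (\<Sum>l<N. \<nu> j l * M l k) = (if j = k then 1 else 0))"

definition K1 :: "real \<Rightarrow> real \<Rightarrow> nat \<Rightarrow> (nat \<Rightarrow> nat \<Rightarrow> real) \<Rightarrow> real \<Rightarrow> real \<Rightarrow> real" where
  "K1 a b N \<nu> x y = (\<Sum>j<N. \<Sum>k<N. \<nu> j k * eps_op (psi1 a b j) x * psi1 a b k y)"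

definition S1 :: "real \<Rightarrow> real \<Rightarrow> nat \<Rightarrow> real \<Rightarrow> real \<Rightarrow> real" where
  "S1 a b N x y = (\<Sum>j<N. (1 - x^2) * phi1 a b j x * phi1 a b j y)"

definition C1 :: "real \<Rightarrow> real \<Rightarrow> nat \<Rightarrow> real" where
  "C1 a b N = sqrt (real N * (real N + a + 1) * (real N + b + 1) * (real N + a + b + 2)
                    / ((2 * real N + a + b + 1) * (2 * real N + a + b + 3)))"

end

theory Submission
  imports Defs
begin

text \<open>Write \<open>\<omega>(x) = 1 - x\<^sup>2\<close> (\<open>omega\<close> in lemma names). The functions \<open>\<phi>\<^sub>j\<close> and
  \<open>\<omega> \<phi>\<^sub>k\<close> are biorthonormal on \<open>[-1, 1]\<close>: this is the orthogonality of the Jacobi polynomials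
  \<open>P\<^sub>j\<^bsup>(a+1,b+1)\<^esup>\<close>, which follows from their Sturm-Liouville equation. Their structure relation
  becomes the ladder relation \<open>(\<omega> \<phi>\<^sub>j)' = c\<^bsub>j-1\<^esub> \<phi>\<^bsub>j-1\<^esub> - c\<^sub>j \<phi>\<^bsub>j+1\<^esub>\<close> with \<open>c\<^sub>j > 0\<close> and
  \<open>c\<^bsub>N-1\<^esub> = C\<^sub>N\<close>. Since \<open>\<epsilon>\<close> inverts differentiation on functions vanishing at \<open>\<plusminus>1\<close>, we get
  \<open>\<epsilon> \<psi>\<^bsub>2i+1\<^esub> = \<omega> \<phi>\<^bsub>2i\<^esub>\<close>; applying \<open>\<epsilon>\<close> to the ladder relation and using the skew-symmetry of
  \<open>(f, g) \<mapsto> \<integral> f \<epsilon>g\<close> then shows that \<open>M1\<close> is the block-diagonal matrix \<open>J\<close> with blocks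
  \<open>[[0, 1], [-1, 0]]\<close>, so \<open>\<nu> = -J\<close>. With this \<open>\<nu>\<close>, \<open>K\<^sub>N - S\<^sub>N\<close> is a telescoping sum whose only
  surviving term is \<open>c\<^bsub>N-1\<^esub> \<epsilon>\<phi>\<^sub>N(x) \<phi>\<^bsub>N-1\<^esub>(y)\<close>.\<close>

section \<open>Expansions in powers of \<open>(x - 1)/2\<close> and \<open>(x + 1)/2\<close>\<close>

text \<open>Coefficients are indexed by integers so that shifted sequences \<open>c (t - 1)\<close> make sense;
  most identities need \<open>c\<close> to vanish at \<open>-1\<close> and at \<open>n + 1\<close>.\<close>

definition uv_sum :: "nat \<Rightarrow> (int \<Rightarrow> real) \<Rightarrow> real \<Rightarrow> real" where
  "uv_sum n c x = (\<Sum>s\<le>n. c (int s) * ((x - 1) / 2) ^ s * ((x + 1) / 2) ^ (n - s))"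

lemma uv_sum_cong:
  "(\<And>t. 0 \<le> t \<Longrightarrow> t \<le> int n \<Longrightarrow> c t = d t) \<Longrightarrow> uv_sum n c x = uv_sum n d x"
  unfolding uv_sum_def by (intro sum.cong) auto

lemma uv_sum_add: "uv_sum n (\<lambda>t. c t + d t) x = uv_sum n c x + uv_sum n d x"
  unfolding uv_sum_def by (simp add: sum.distrib algebra_simps)

lemma uv_sum_cmult: "uv_sum n (\<lambda>t. r * c t) x = r * uv_sum n c x"
  unfolding uv_sum_def by (simp add: sum_distrib_left algebra_simps)

lemma uv_sum_times_u:
  assumes "c (-1) = 0"
  shows "(x - 1) / 2 * uv_sum n c x = uv_sum (Suc n) (\<lambda>t. c (t - 1)) x"
proof -
  have "uv_sum (Suc n) (\<lambda>t. c (t - 1)) x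
      = (\<Sum>s\<le>n. c (int s) * ((x - 1) / 2) ^ Suc s * ((x + 1) / 2) ^ (n - s))
        + c (-1) * ((x + 1) / 2) ^ Suc n"
    unfolding uv_sum_def by (subst sum.atMost_Suc_shift) simp
  then show ?thesis
    unfolding uv_sum_def using assms by (simp add: sum_distrib_left algebra_simps)
qed

lemma uv_sum_times_v:
  assumes "c (int n + 1) = 0"
  shows "(x + 1) / 2 * uv_sum n c x = uv_sum (Suc n) c x"
proof -
  have "uv_sum (Suc n) c x
      = (\<Sum>s\<le>n. c (int s) * ((x - 1) / 2) ^ s * ((x + 1) / 2) ^ (Suc n - s))
        + c (int n + 1) * ((x - 1) / 2) ^ Suc n"
    unfolding uv_sum_def by (simp add: add_ac)
  then show ?thesis
    unfolding uv_sum_def using assms by (simp add: sum_distrib_left algebra_simps Suc_diff_le)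
qed

lemma uv_sum_times_linear:
  assumes "c (-1) = 0" and "c (int n + 1) = 0"
  shows "(p * ((x + 1) / 2) + q * ((x - 1) / 2)) * uv_sum n c x
       = uv_sum (Suc n) (\<lambda>t. p * c t + q * c (t - 1)) x"
proof -
  have "(p * ((x + 1) / 2) + q * ((x - 1) / 2)) * uv_sum n c x
      = p * ((x + 1) / 2 * uv_sum n c x) + q * ((x - 1) / 2 * uv_sum n c x)"
    by (simp add: algebra_simps)
  also have "\<dots> = uv_sum (Suc n) (\<lambda>t. p * c t + q * c (t - 1)) x"
    unfolding uv_sum_times_u[where c=c, OF assms(1)] uv_sum_times_v[where c=c, OF assms(2)]
    by (simp add: uv_sum_add uv_sum_cmult)
  finally show ?thesis .
qed

text \<open>Multiply by \<open>(x+1)/2 - (x-1)/2 = 1\<close>.\<close>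

lemma uv_sum_raise_degree:
  assumes "c (-1) = 0" and "c (int n + 1) = 0"
  shows "uv_sum n c x = uv_sum (Suc n) (\<lambda>t. c t - c (t - 1)) x"
proof -
  have "1 * ((x + 1) / 2) + (-1) * ((x - 1) / 2) = 1" by (simp add: field_simps)
  then show ?thesis
    using uv_sum_times_linear[where c=c and p=1 and q="-1" and x=x, OF assms] by simp
qed

lemma has_real_derivative_uv_sum:
  "(uv_sum (Suc m) c has_real_derivative
     uv_sum m (\<lambda>t. (of_int (t + 1) * c (t + 1) + (real (Suc m) - of_int t) * c t) / 2) x) (at x)"
proof -
  let ?u = "(x - 1) / 2" and ?v = "(x + 1) / 2"
  have "((\<lambda>x. ((x - 1) / 2) ^ s * ((x + 1) / 2) ^ k) has_real_derivative
      (real s * ?u ^ (s - 1) * ?v ^ k + real k * ?u ^ s * ?v ^ (k - 1)) / 2) (at x)" for s k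
  proof -
    have "((\<lambda>x. ((x - 1) / 2) ^ s * ((x + 1) / 2) ^ k) has_real_derivative
        (real s * (1 / 2 * ?u ^ (s - 1))) * ?v ^ k + (real k * (1 / 2 * ?v ^ (k - 1))) * ?u ^ s)
        (at x)"
      by (intro DERIV_mult DERIV_power) (auto intro!: derivative_eq_intros)
    then show ?thesis by (simp add: algebra_simps add_divide_distrib)
  qed
  then have "(uv_sum (Suc m) c has_real_derivative
      (\<Sum>s\<le>Suc m. c (int s) * ((real s * ?u ^ (s - 1) * ?v ^ (Suc m - s)
        + real (Suc m - s) * ?u ^ s * ?v ^ (Suc m - s - 1)) / 2))) (at x)"
    unfolding uv_sum_def[abs_def] mult.assoc by (intro DERIV_sum DERIV_cmult)
  also have "(\<Sum>s\<le>Suc m. c (int s) * ((real s * ?u ^ (s - 1) * ?v ^ (Suc m - s)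
        + real (Suc m - s) * ?u ^ s * ?v ^ (Suc m - s - 1)) / 2))
      = (\<Sum>s\<le>Suc m. c (int s) * (real s * ?u ^ (s - 1) * ?v ^ (Suc m - s)) / 2)
      + (\<Sum>s\<le>Suc m. c (int s) * (real (Suc m - s) * ?u ^ s * ?v ^ (Suc m - s - 1)) / 2)"
    by (simp add: add_divide_distrib distrib_left sum.distrib)
  also have "(\<Sum>s\<le>Suc m. c (int s) * (real s * ?u ^ (s - 1) * ?v ^ (Suc m - s)) / 2)
      = (\<Sum>s\<le>m. c (int s + 1) * real (Suc s) * ?u ^ s * ?v ^ (m - s) / 2)"
    by (subst sum.atMost_Suc_shift) (simp add: add_ac mult.assoc)
  also have "(\<Sum>s\<le>Suc m. c (int s) * (real (Suc m - s) * ?u ^ s * ?v ^ (Suc m - s - 1)) / 2)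
      = (\<Sum>s\<le>m. c (int s) * real (Suc m - s) * ?u ^ s * ?v ^ (m - s) / 2)"
    by (simp add: mult.assoc)
  also have "(\<Sum>s\<le>m. c (int s + 1) * real (Suc s) * ?u ^ s * ?v ^ (m - s) / 2)
      + (\<Sum>s\<le>m. c (int s) * real (Suc m - s) * ?u ^ s * ?v ^ (m - s) / 2)
      = uv_sum m (\<lambda>t. (of_int (t + 1) * c (t + 1) + (real (Suc m) - of_int t) * c t) / 2) x"
    unfolding uv_sum_def sum.distrib[symmetric]
    by (intro sum.cong refl) (simp add: field_simps)
  finally show ?thesis .
qed

lemma uv_sum_omega_deriv:
  assumes "c (-1) = 0" and "c (int n + 1) = 0"
  shows "(1 - x\<^sup>2) * deriv (uv_sum n c) x
       = uv_sum (Suc n) (\<lambda>t. -2 * (of_int t * c t + (real n + 1 - of_int t) * c (t - 1))) x"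
proof (cases n)
  case 0
  have "uv_sum n c = (\<lambda>_. c 0)" by (auto simp: 0 uv_sum_def)
  then have "deriv (uv_sum n c) x = 0" by simp
  then show ?thesis using 0 assms by (simp add: uv_sum_def)
next
  case (Suc m)
  define d where "d t = (of_int (t + 1) * c (t + 1) + (real (Suc m) - of_int t) * c t) / 2" for t
  have d: "d (-1) = 0" "d (int m + 1) = 0" using assms Suc by (simp_all add: d_def add_ac)
  have "(1 - x\<^sup>2) * deriv (uv_sum n c) x = -4 * ((x - 1) / 2 * ((x + 1) / 2 * uv_sum m d x))"
    unfolding Suc DERIV_imp_deriv[OF has_real_derivative_uv_sum] d_def
    by (simp add: power2_eq_square field_simps)
  also have "\<dots> = -4 * uv_sum (Suc (Suc m)) (\<lambda>t. d (t - 1)) x"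
    by (simp only: uv_sum_times_v[where c=d, OF d(2)] uv_sum_times_u[where c=d, OF d(1)])
  also have "\<dots> = uv_sum (Suc n) (\<lambda>t. -2 * (of_int t * c t + (real n + 1 - of_int t) * c (t - 1))) x"
    unfolding Suc uv_sum_cmult[symmetric] by (intro uv_sum_cong) (simp add: d_def field_simps)
  finally show ?thesis .
qed

section \<open>Jacobi polynomials\<close>

text \<open>The poles of \<^const>\<open>Gamma\<close> make these coefficients vanish outside \<open>[0, n]\<close>.\<close>

definition jacobi_coeff :: "nat \<Rightarrow> real \<Rightarrow> real \<Rightarrow> int \<Rightarrow> real" where
  "jacobi_coeff n \<alpha> \<beta> t = Gamma (real n + \<alpha> + 1) * Gamma (real n + \<beta> + 1)
     * rGamma (of_int t + \<alpha> + 1) * rGamma (real n - of_int t + \<beta> + 1)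
     * rGamma (of_int t + 1) * rGamma (real n - of_int t + 1)"

lemma jacobi_coeff_eq_0:
  assumes "t < 0 \<or> int n < t"
  shows "jacobi_coeff n \<alpha> \<beta> t = 0"
proof -
  have "of_int (t + 1) \<in> (\<int>\<^sub>\<le>\<^sub>0 :: real set) \<or> of_int (int n - t + 1) \<in> (\<int>\<^sub>\<le>\<^sub>0 :: real set)"
  proof (cases "t < 0")
    case True
    then show ?thesis by (intro disjI1 nonpos_Ints_of_int) simp
  next
    case False
    then show ?thesis using assms by (intro disjI2 nonpos_Ints_of_int) simp
  qed
  then have "rGamma (of_int t + 1 :: real) = 0 \<or> rGamma (real n - of_int t + 1) = 0"
    by (auto simp: rGamma_eq_zero_iff add_ac)
  then show ?thesis unfolding jacobi_coeff_def by auto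
qed

lemma gbinomial_eq_Gamma_rGamma:
  assumes "(z::real) - real k + 1 > 0"
  shows "z gchoose k = Gamma (z + 1) * rGamma (real k + 1) * rGamma (z - real k + 1)"
proof -
  have "z gchoose k = Gamma (z + 1) / (fact k * Gamma (z - of_nat k + 1))"
    using assms by (intro gbinomial_Gamma) (auto elim!: nonpos_Ints_cases)
  also have "fact k = Gamma (real k + 1)"
    using Gamma_fact[of k, where 'a=real] by (simp add: add_ac)
  finally show ?thesis by (simp add: rGamma_inverse_Gamma field_simps)
qed

lemma jacobiP_eq_uv_sum:
  assumes "\<alpha> > -1" and "\<beta> > -1"
  shows "jacobiP n \<alpha> \<beta> = uv_sum n (jacobi_coeff n \<alpha> \<beta>)"
proof
  fix x
  show "jacobiP n \<alpha> \<beta> x = uv_sum n (jacobi_coeff n \<alpha> \<beta>) x"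
    unfolding jacobiP_def uv_sum_def
  proof (intro sum.cong refl)
    fix s assume s: "s \<in> {..n}"
    have "(real n + \<alpha>) gchoose (n - s)
        = Gamma (real n + \<alpha> + 1) * rGamma (real n - real s + 1) * rGamma (real s + \<alpha> + 1)"
      using s assms by (subst gbinomial_eq_Gamma_rGamma) (auto simp: algebra_simps)
    moreover have "(real n + \<beta>) gchoose s
        = Gamma (real n + \<beta> + 1) * rGamma (real s + 1) * rGamma (real n - real s + \<beta> + 1)"
      using s assms by (subst gbinomial_eq_Gamma_rGamma) (auto simp: algebra_simps)
    ultimately show "((real n + \<alpha>) gchoose (n - s)) * ((real n + \<beta>) gchoose s)
        * ((x - 1) / 2) ^ s * ((x + 1) / 2) ^ (n - s)
      = jacobi_coeff n \<alpha> \<beta> (int s) * ((x - 1) / 2) ^ s * ((x + 1) / 2) ^ (n - s)"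
      unfolding jacobi_coeff_def by simp
  qed
qed

text \<open>Shift rules for \<^const>\<open>Gamma\<close> and \<^const>\<open>rGamma\<close>, stated so that \<open>rule\<close> can match
  them against an explicitly written equation and \<open>simp\<close> can check the side conditions.\<close>

lemma rGamma_step: "y = x + 1 \<Longrightarrow> c = x \<Longrightarrow> rGamma x = c * rGamma (y::real)"
  using rGamma_plus1[of x] by simp

lemma rGamma_step2: "y = x + 2 \<Longrightarrow> c = x * (x + 1) \<Longrightarrow> rGamma x = c * rGamma (y::real)"
  using rGamma_plus1[of x] rGamma_plus1[of "x + 1"] by (simp add: add.assoc mult.assoc)

lemma Gamma_step: "x > 0 \<Longrightarrow> y = x + 1 \<Longrightarrow> c = x \<Longrightarrow> Gamma y = c * Gamma (x::real)"
  using Gamma_plus1[of x] nonpos_Ints_nonpos[of x] by fastforce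

lemma Gamma_step2: "x > 0 \<Longrightarrow> y = x + 2 \<Longrightarrow> c = (x + 1) * x \<Longrightarrow> Gamma y = c * Gamma (x::real)"
  using Gamma_plus1[of x] Gamma_plus1[of "x + 1"]
    nonpos_Ints_nonpos[of x] nonpos_Ints_nonpos[of "x + 1"]
  by (force simp: add.assoc)

text \<open>In the coefficient identities below, every \<^const>\<open>Gamma\<close> and \<^const>\<open>rGamma\<close> factor is
  shifted to a common argument, after which the identity is polynomial in \<open>t\<close>.\<close>

lemma jacobi_coeff_deriv:
  "(of_int (t + 1) * jacobi_coeff (Suc m) \<alpha> \<beta> (t + 1)
      + (real (Suc m) - of_int t) * jacobi_coeff (Suc m) \<alpha> \<beta> t) / 2
   = (real (Suc m) + \<alpha> + \<beta> + 1) / 2 * jacobi_coeff m (\<alpha> + 1) (\<beta> + 1) t"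
proof -
  let ?t = "real_of_int t" and ?m = "real m"
  have shifts:
    "Gamma (real (Suc m) + \<alpha> + 1) = Gamma (?m + \<alpha> + 2)"
    "Gamma (?m + (\<alpha> + 1) + 1) = Gamma (?m + \<alpha> + 2)"
    "Gamma (real (Suc m) + \<beta> + 1) = Gamma (?m + \<beta> + 2)"
    "Gamma (?m + (\<beta> + 1) + 1) = Gamma (?m + \<beta> + 2)"
    "rGamma (real_of_int (t + 1) + \<alpha> + 1) = rGamma (?t + \<alpha> + 2)"
    "rGamma (?t + (\<alpha> + 1) + 1) = rGamma (?t + \<alpha> + 2)"
    "rGamma (real (Suc m) - real_of_int (t + 1) + \<beta> + 1)
       = (?m - ?t + \<beta> + 1) * rGamma (?m - ?t + \<beta> + 2)"
    "rGamma (real_of_int (t + 1) + 1) = rGamma (?t + 2)"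
    "rGamma (real (Suc m) - real_of_int (t + 1) + 1) = (?m - ?t + 1) * rGamma (?m - ?t + 2)"
    "rGamma (?t + \<alpha> + 1) = (?t + \<alpha> + 1) * rGamma (?t + \<alpha> + 2)"
    "rGamma (real (Suc m) - ?t + \<beta> + 1) = rGamma (?m - ?t + \<beta> + 2)"
    "rGamma (?t + 1) = (?t + 1) * rGamma (?t + 2)"
    "rGamma (real (Suc m) - ?t + 1) = rGamma (?m - ?t + 2)"
    "rGamma (?m - ?t + (\<beta> + 1) + 1) = rGamma (?m - ?t + \<beta> + 2)"
    "rGamma (?m - ?t + 1) = (?m - ?t + 1) * rGamma (?m - ?t + 2)"
    by (rule arg_cong[where f=Gamma] arg_cong[where f=rGamma] rGamma_step; simp; fail)+
  show ?thesis unfolding jacobi_coeff_def shifts by (simp add: field_simps; algebra)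
qed

lemma jacobi_coeff_raise:
  "(of_int t + \<alpha> + 1) * jacobi_coeff m (\<alpha> + 1) (\<beta> + 1) t
     + (real m + 1 - of_int t + \<beta> + 1) * jacobi_coeff m (\<alpha> + 1) (\<beta> + 1) (t - 1)
   = (real m + 1) * jacobi_coeff (Suc m) \<alpha> \<beta> t"
proof -
  let ?t = "real_of_int t" and ?m = "real m"
  have shifts:
    "Gamma (real (Suc m) + \<alpha> + 1) = Gamma (?m + \<alpha> + 2)"
    "Gamma (?m + (\<alpha> + 1) + 1) = Gamma (?m + \<alpha> + 2)"
    "Gamma (real (Suc m) + \<beta> + 1) = Gamma (?m + \<beta> + 2)"
    "Gamma (?m + (\<beta> + 1) + 1) = Gamma (?m + \<beta> + 2)"
    "rGamma (?t + (\<alpha> + 1) + 1) = rGamma (?t + \<alpha> + 2)"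
    "rGamma (?m - ?t + (\<beta> + 1) + 1) = (?m - ?t + \<beta> + 2) * rGamma (?m - ?t + \<beta> + 3)"
    "rGamma (?m - ?t + 1) = (?m - ?t + 1) * rGamma (?m - ?t + 2)"
    "rGamma (real_of_int (t - 1) + (\<alpha> + 1) + 1) = (?t + \<alpha> + 1) * rGamma (?t + \<alpha> + 2)"
    "rGamma (?m - real_of_int (t - 1) + (\<beta> + 1) + 1) = rGamma (?m - ?t + \<beta> + 3)"
    "rGamma (real_of_int (t - 1) + 1) = ?t * rGamma (?t + 1)"
    "rGamma (?m - real_of_int (t - 1) + 1) = rGamma (?m - ?t + 2)"
    "rGamma (?t + \<alpha> + 1) = (?t + \<alpha> + 1) * rGamma (?t + \<alpha> + 2)"
    "rGamma (real (Suc m) - ?t + \<beta> + 1) = (?m - ?t + \<beta> + 2) * rGamma (?m - ?t + \<beta> + 3)"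
    "rGamma (real (Suc m) - ?t + 1) = rGamma (?m - ?t + 2)"
    by (rule arg_cong[where f=Gamma] arg_cong[where f=rGamma] rGamma_step; simp; fail)+
  show ?thesis unfolding jacobi_coeff_def shifts by (simp add: field_simps; algebra)
qed

definition jacobi_gamma :: "real \<Rightarrow> real \<Rightarrow> nat \<Rightarrow> real" where
  "jacobi_gamma \<alpha> \<beta> j =
     (if j = 0 then 0 else (real j + \<alpha>) * (real j + \<beta>) / (2 * real j + \<alpha> + \<beta> + 1))"

definition jacobi_delta :: "real \<Rightarrow> real \<Rightarrow> nat \<Rightarrow> real" where
  "jacobi_delta \<alpha> \<beta> j =
     (if j = 0 then 1 else (real j + 1) * (real j + \<alpha> + \<beta> + 1) / (2 * real j + \<alpha> + \<beta> + 1))"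

lemma jacobi_coeff_structure:
  assumes "\<alpha> > -1" and "\<beta> > -1"
  shows "(2 * real m + \<alpha> + \<beta> + 3)
       * (-2 * (of_int t * jacobi_coeff (Suc m) \<alpha> \<beta> t
                + (real m + 2 - of_int t) * jacobi_coeff (Suc m) \<alpha> \<beta> (t - 1))
          - (\<alpha> + 1) * jacobi_coeff (Suc m) \<alpha> \<beta> t - (\<beta> + 1) * jacobi_coeff (Suc m) \<alpha> \<beta> (t - 1))
     = (real m + 1 + \<alpha>) * (real m + 1 + \<beta>)
       * (jacobi_coeff m \<alpha> \<beta> t - 2 * jacobi_coeff m \<alpha> \<beta> (t - 1) + jacobi_coeff m \<alpha> \<beta> (t - 1 - 1))
       - (real m + 2) * (real m + \<alpha> + \<beta> + 2) * jacobi_coeff (Suc (Suc m)) \<alpha> \<beta> t"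
proof -
  let ?t = "real_of_int t" and ?m = "real m"
  have Gamma_shifts:
    "Gamma (real (Suc m) + \<alpha> + 1) = (?m + \<alpha> + 1) * Gamma (?m + \<alpha> + 1)"
    "Gamma (real (Suc m) + \<beta> + 1) = (?m + \<beta> + 1) * Gamma (?m + \<beta> + 1)"
    "Gamma (real (Suc (Suc m)) + \<alpha> + 1) = (?m + \<alpha> + 2) * (?m + \<alpha> + 1) * Gamma (?m + \<alpha> + 1)"
    "Gamma (real (Suc (Suc m)) + \<beta> + 1) = (?m + \<beta> + 2) * (?m + \<beta> + 1) * Gamma (?m + \<beta> + 1)"
    by (rule Gamma_step Gamma_step2; use assms in simp; fail)+
  have rGamma_shifts:
    "rGamma (real (Suc m) - ?t + \<beta> + 1) = (?m - ?t + \<beta> + 2) * rGamma (?m - ?t + \<beta> + 3)"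
    "rGamma (real (Suc m) - ?t + 1) = (?m - ?t + 2) * rGamma (?m - ?t + 3)"
    "rGamma (real_of_int (t - 1) + \<alpha> + 1) = (?t + \<alpha>) * rGamma (?t + \<alpha> + 1)"
    "rGamma (real (Suc m) - real_of_int (t - 1) + \<beta> + 1) = rGamma (?m - ?t + \<beta> + 3)"
    "rGamma (real_of_int (t - 1) + 1) = ?t * rGamma (?t + 1)"
    "rGamma (real (Suc m) - real_of_int (t - 1) + 1) = rGamma (?m - ?t + 3)"
    "rGamma (?m - real_of_int (t - 1) + \<beta> + 1) = (?m - ?t + \<beta> + 2) * rGamma (?m - ?t + \<beta> + 3)"
    "rGamma (?m - real_of_int (t - 1) + 1) = (?m - ?t + 2) * rGamma (?m - ?t + 3)"
    "rGamma (?m - real_of_int (t - 1 - 1) + \<beta> + 1) = rGamma (?m - ?t + \<beta> + 3)"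
    "rGamma (?m - real_of_int (t - 1 - 1) + 1) = rGamma (?m - ?t + 3)"
    "rGamma (real (Suc (Suc m)) - ?t + \<beta> + 1) = rGamma (?m - ?t + \<beta> + 3)"
    "rGamma (real (Suc (Suc m)) - ?t + 1) = rGamma (?m - ?t + 3)"
    by (rule arg_cong[where f=rGamma] rGamma_step; simp; fail)+
  have rGamma_shifts2:
    "rGamma (?m - ?t + \<beta> + 1) = ((?m - ?t + \<beta> + 1) * (?m - ?t + \<beta> + 2)) * rGamma (?m - ?t + \<beta> + 3)"
    "rGamma (?m - ?t + 1) = ((?m - ?t + 1) * (?m - ?t + 2)) * rGamma (?m - ?t + 3)"
    "rGamma (real_of_int (t - 1 - 1) + \<alpha> + 1) = ((?t + \<alpha> - 1) * (?t + \<alpha>)) * rGamma (?t + \<alpha> + 1)"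
    "rGamma (real_of_int (t - 1 - 1) + 1) = ((?t - 1) * ?t) * rGamma (?t + 1)"
    by (rule rGamma_step2; simp; fail)+
  define X where "X = Gamma (?m + \<alpha> + 1) * Gamma (?m + \<beta> + 1) * rGamma (?t + \<alpha> + 1)
    * rGamma (?m - ?t + \<beta> + 3) * rGamma (?t + 1) * rGamma (?m - ?t + 3)"
  have coeffs:
    "jacobi_coeff (Suc m) \<alpha> \<beta> t
       = (?m + \<alpha> + 1) * (?m + \<beta> + 1) * (?m - ?t + \<beta> + 2) * (?m - ?t + 2) * X"
    "jacobi_coeff (Suc m) \<alpha> \<beta> (t - 1) = (?m + \<alpha> + 1) * (?m + \<beta> + 1) * (?t + \<alpha>) * ?t * X"
    "jacobi_coeff m \<alpha> \<beta> t
       = (?m - ?t + \<beta> + 1) * (?m - ?t + \<beta> + 2) * (?m - ?t + 1) * (?m - ?t + 2) * X"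
    "jacobi_coeff m \<alpha> \<beta> (t - 1) = (?t + \<alpha>) * (?m - ?t + \<beta> + 2) * ?t * (?m - ?t + 2) * X"
    "jacobi_coeff m \<alpha> \<beta> (t - 1 - 1) = (?t + \<alpha> - 1) * (?t + \<alpha>) * (?t - 1) * ?t * X"
    "jacobi_coeff (Suc (Suc m)) \<alpha> \<beta> t
       = (?m + \<alpha> + 2) * (?m + \<alpha> + 1) * (?m + \<beta> + 2) * (?m + \<beta> + 1) * X"
    unfolding X_def jacobi_coeff_def Gamma_shifts rGamma_shifts rGamma_shifts2
    by (simp_all add: ac_simps)
  show ?thesis unfolding coeffs by algebra
qed

lemma has_real_derivative_jacobiP_Suc:
  assumes "\<alpha> > -1" and "\<beta> > -1"
  shows "(jacobiP (Suc m) \<alpha> \<beta> has_real_derivative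
           (real (Suc m) + \<alpha> + \<beta> + 1) / 2 * jacobiP m (\<alpha> + 1) (\<beta> + 1) x) (at x)"
proof -
  have "jacobiP m (\<alpha> + 1) (\<beta> + 1) = uv_sum m (jacobi_coeff m (\<alpha> + 1) (\<beta> + 1))"
    using assms by (intro jacobiP_eq_uv_sum) auto
  then show ?thesis
    using has_real_derivative_uv_sum[where c="jacobi_coeff (Suc m) \<alpha> \<beta>" and m=m and x=x]
    unfolding jacobiP_eq_uv_sum[OF assms] jacobi_coeff_deriv uv_sum_cmult by simp
qed

lemma deriv_jacobiP_Suc:
  "\<alpha> > -1 \<Longrightarrow> \<beta> > -1 \<Longrightarrow>
     deriv (jacobiP (Suc m) \<alpha> \<beta>) x = (real (Suc m) + \<alpha> + \<beta> + 1) / 2 * jacobiP m (\<alpha> + 1) (\<beta> + 1) x"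
  by (rule DERIV_imp_deriv[OF has_real_derivative_jacobiP_Suc])

lemma jacobiP_0: "jacobiP 0 \<alpha> \<beta> = (\<lambda>_. 1)"
  unfolding jacobiP_def by simp

lemma jacobiP_1: "jacobiP 1 \<alpha> \<beta> x = (\<alpha> + 1) * ((x + 1) / 2) + (\<beta> + 1) * ((x - 1) / 2)"
  unfolding jacobiP_def by (simp add: algebra_simps)

lemma has_real_derivative_jacobiP:
  assumes "\<alpha> > -1" and "\<beta> > -1"
  shows "(jacobiP n \<alpha> \<beta> has_real_derivative deriv (jacobiP n \<alpha> \<beta>) x) (at x)"
proof (cases n)
  case 0
  then show ?thesis by (simp add: jacobiP_0)
next
  case (Suc m)
  show ?thesis
    unfolding Suc deriv_jacobiP_Suc[OF assms] by (rule has_real_derivative_jacobiP_Suc[OF assms])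
qed

lemma continuous_on_jacobiP: "continuous_on S (jacobiP n \<alpha> \<beta>)"
  unfolding jacobiP_def[abs_def] by (intro continuous_intros) auto

lemma continuous_on_deriv_jacobiP:
  assumes "\<alpha> > -1" and "\<beta> > -1"
  shows "continuous_on S (deriv (jacobiP n \<alpha> \<beta>))"
proof (cases n)
  case 0
  then show ?thesis by (simp add: jacobiP_0)
next
  case (Suc m)
  have eq: "deriv (jacobiP n \<alpha> \<beta>) = (\<lambda>x. (real n + \<alpha> + \<beta> + 1) / 2 * jacobiP m (\<alpha> + 1) (\<beta> + 1) x)"
    unfolding Suc by (rule ext) (rule deriv_jacobiP_Suc[OF assms])
  show ?thesis unfolding eq by (intro continuous_on_mult_left continuous_on_jacobiP)
qed

lemma jacobi_raising:
  assumes "\<alpha> > -1" and "\<beta> > -1"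
  shows "(1 - x\<^sup>2) * deriv (jacobiP m (\<alpha> + 1) (\<beta> + 1)) x
       + ((\<beta> - \<alpha>) - (\<alpha> + \<beta> + 2) * x) * jacobiP m (\<alpha> + 1) (\<beta> + 1) x
       = -2 * (real m + 1) * jacobiP (Suc m) \<alpha> \<beta> x"
proof -
  let ?c = "jacobi_coeff m (\<alpha> + 1) (\<beta> + 1)"
  have P: "jacobiP m (\<alpha> + 1) (\<beta> + 1) = uv_sum m ?c"
    using assms by (intro jacobiP_eq_uv_sum) auto
  have c: "?c (-1) = 0" "?c (int m + 1) = 0" by (simp_all add: jacobi_coeff_eq_0)
  have "(\<beta> - \<alpha>) - (\<alpha> + \<beta> + 2) * x
      = (-2 * (\<alpha> + 1)) * ((x + 1) / 2) + (-2 * (\<beta> + 1)) * ((x - 1) / 2)"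
    by (simp add: field_simps)
  then have lin: "((\<beta> - \<alpha>) - (\<alpha> + \<beta> + 2) * x) * uv_sum m ?c x
      = uv_sum (Suc m) (\<lambda>t. (-2 * (\<alpha> + 1)) * ?c t + (-2 * (\<beta> + 1)) * ?c (t - 1)) x"
    by (simp only: uv_sum_times_linear[where c="?c", OF c])
  have "(1 - x\<^sup>2) * deriv (jacobiP m (\<alpha> + 1) (\<beta> + 1)) x
      + ((\<beta> - \<alpha>) - (\<alpha> + \<beta> + 2) * x) * jacobiP m (\<alpha> + 1) (\<beta> + 1) x
      = uv_sum (Suc m) (\<lambda>t. -2 * (real m + 1) * jacobi_coeff (Suc m) \<alpha> \<beta> t) x"
    unfolding P lin uv_sum_omega_deriv[where c="?c", OF c] uv_sum_add[symmetric]
  proof (rule uv_sum_cong)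
    fix t :: int
    show "-2 * (of_int t * ?c t + (real m + 1 - of_int t) * ?c (t - 1))
        + ((-2 * (\<alpha> + 1)) * ?c t + (-2 * (\<beta> + 1)) * ?c (t - 1))
      = -2 * (real m + 1) * jacobi_coeff (Suc m) \<alpha> \<beta> t"
      using jacobi_coeff_raise[of t \<alpha> m \<beta>] by (simp add: algebra_simps)
  qed
  also have "\<dots> = -2 * (real m + 1) * jacobiP (Suc m) \<alpha> \<beta> x"
    by (simp add: uv_sum_cmult jacobiP_eq_uv_sum[OF assms])
  finally show ?thesis .
qed

lemma jacobi_structure_relation:
  assumes "\<alpha> > -1" and "\<beta> > -1"
  shows "(1 - x\<^sup>2) * deriv (jacobiP j \<alpha> \<beta>) x
       + ((\<beta> - \<alpha>) / 2 - (\<alpha> + \<beta> + 2) / 2 * x) * jacobiP j \<alpha> \<beta> x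
       = jacobi_gamma \<alpha> \<beta> j * jacobiP (j - 1) \<alpha> \<beta> x - jacobi_delta \<alpha> \<beta> j * jacobiP (Suc j) \<alpha> \<beta> x"
proof (cases j)
  case 0
  then show ?thesis
    using jacobiP_1[of \<alpha> \<beta> x] by (simp add: jacobi_gamma_def jacobi_delta_def jacobiP_0 field_simps)
next
  case (Suc m)
  let ?p = "jacobi_coeff (Suc m) \<alpha> \<beta>" and ?r = "jacobi_coeff m \<alpha> \<beta>"
    and ?s = "jacobi_coeff (Suc (Suc m)) \<alpha> \<beta>"
  have P: "\<And>n. jacobiP n \<alpha> \<beta> = uv_sum n (jacobi_coeff n \<alpha> \<beta>)"
    using assms by (rule jacobiP_eq_uv_sum)
  have p: "?p (-1) = 0" "?p (int (Suc m) + 1) = 0" by (simp_all add: jacobi_coeff_eq_0)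
  have "(\<beta> - \<alpha>) / 2 - (\<alpha> + \<beta> + 2) / 2 * x
      = (-(\<alpha> + 1)) * ((x + 1) / 2) + (-(\<beta> + 1)) * ((x - 1) / 2)"
    by (simp add: field_simps)
  then have lin: "((\<beta> - \<alpha>) / 2 - (\<alpha> + \<beta> + 2) / 2 * x) * uv_sum (Suc m) ?p x
      = uv_sum (Suc (Suc m)) (\<lambda>t. (-(\<alpha> + 1)) * ?p t + (-(\<beta> + 1)) * ?p (t - 1)) x"
    by (simp only: uv_sum_times_linear[where c="?p", OF p])
  have "uv_sum m ?r x = uv_sum (Suc m) (\<lambda>t. ?r t - ?r (t - 1)) x"
    by (rule uv_sum_raise_degree) (simp_all add: jacobi_coeff_eq_0)
  also have "\<dots> = uv_sum (Suc (Suc m)) (\<lambda>t. (?r t - ?r (t - 1)) - (?r (t - 1) - ?r (t - 1 - 1))) x"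
    by (rule uv_sum_raise_degree) (simp_all add: jacobi_coeff_eq_0)
  finally have lower:
    "jacobiP m \<alpha> \<beta> x = uv_sum (Suc (Suc m)) (\<lambda>t. ?r t - 2 * ?r (t - 1) + ?r (t - 1 - 1)) x"
    unfolding P by (simp add: algebra_simps)
  have D: "2 * real m + \<alpha> + \<beta> + 3 > 0" using assms by simp
  have "(1 - x\<^sup>2) * deriv (jacobiP j \<alpha> \<beta>) x
      + ((\<beta> - \<alpha>) / 2 - (\<alpha> + \<beta> + 2) / 2 * x) * jacobiP j \<alpha> \<beta> x
      = uv_sum (Suc (Suc m))
          (\<lambda>t. jacobi_gamma \<alpha> \<beta> j * (?r t - 2 * ?r (t - 1) + ?r (t - 1 - 1))
               + (- jacobi_delta \<alpha> \<beta> j) * ?s t) x"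
    unfolding Suc P lin uv_sum_omega_deriv[where c="?p", OF p] uv_sum_add[symmetric]
  proof (rule uv_sum_cong)
    fix t :: int
    have gen: "\<And>D L A R B S :: real.
        D > 0 \<Longrightarrow> D * L = A * R - B * S \<Longrightarrow> L = A / D * R + (- (B / D)) * S"
      by (simp add: field_simps)
    show "-2 * (of_int t * ?p t + (real (Suc m) + 1 - of_int t) * ?p (t - 1))
        + ((-(\<alpha> + 1)) * ?p t + (-(\<beta> + 1)) * ?p (t - 1))
      = jacobi_gamma \<alpha> \<beta> (Suc m) * (?r t - 2 * ?r (t - 1) + ?r (t - 1 - 1))
        + (- jacobi_delta \<alpha> \<beta> (Suc m)) * ?s t"
      using gen[OF D jacobi_coeff_structure[OF assms, of m t]]
      by (simp add: jacobi_gamma_def jacobi_delta_def algebra_simps)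
  qed
  also have "\<dots> = jacobi_gamma \<alpha> \<beta> j * jacobiP (j - 1) \<alpha> \<beta> x
      + (- jacobi_delta \<alpha> \<beta> j) * jacobiP (Suc j) \<alpha> \<beta> x"
    using lower unfolding Suc P diff_Suc_1
    by (simp only: uv_sum_cmult[symmetric] uv_sum_add[symmetric])
  finally show ?thesis by simp
qed

section \<open>The Jacobi weight and orthogonality\<close>

lemma jacobi_weight_pos: "x \<in> {-1<..<1} \<Longrightarrow> jacobi_weight p q x > 0"
  unfolding jacobi_weight_def by auto

lemma jacobi_weight_nonneg: "jacobi_weight p q x \<ge> 0"
  unfolding jacobi_weight_def by simp

text \<open>Since \<open>0 powr p = 0\<close> for every \<open>p\<close>, the weight vanishes at both endpoints even when it
  is unbounded near them.\<close>

lemma jacobi_weight_endpoints: "jacobi_weight p q 1 = 0" "jacobi_weight p q (-1) = 0"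
  unfolding jacobi_weight_def by simp_all

lemma jacobi_weight_mult:
  "x \<in> {-1..1} \<Longrightarrow> jacobi_weight p q x * jacobi_weight r s x = jacobi_weight (p + r) (q + s) x"
  by (cases "x = 1 \<or> x = -1") (auto simp: jacobi_weight_def powr_add)

lemma jacobi_weight_plus_1:
  "x \<in> {-1..1} \<Longrightarrow> jacobi_weight (p + 1) (q + 1) x = (1 - x\<^sup>2) * jacobi_weight p q x"
  by (cases "x = 1 \<or> x = -1")
     (auto simp: jacobi_weight_def powr_add power2_eq_square algebra_simps)

lemma has_real_derivative_jacobi_weight:
  assumes "x \<in> {-1<..<1}"
  shows "(jacobi_weight (p + 1) (q + 1) has_real_derivative
           jacobi_weight p q x * ((q + 1) * (1 - x) - (p + 1) * (1 + x))) (at x)"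
proof -
  have x: "1 - x > 0" "1 + x > 0" using assms by auto
  show ?thesis
    unfolding jacobi_weight_def[abs_def]
    by (rule derivative_eq_intros refl | use x in \<open>simp add: powr_add algebra_simps\<close>)+
qed

lemma continuous_on_jacobi_weight_open: "continuous_on {-1<..<1} (jacobi_weight p q)"
  unfolding jacobi_weight_def[abs_def] by (intro continuous_intros) auto

lemma continuous_on_jacobi_weight:
  "p > 0 \<Longrightarrow> q > 0 \<Longrightarrow> continuous_on {-1..1} (jacobi_weight p q)"
  unfolding jacobi_weight_def[abs_def] by (intro continuous_intros continuous_on_powr') auto

lemma jacobi_weight_le:
  assumes "x \<in> {-1<..<1}"
  shows "jacobi_weight p q x \<le> (1 + 2 powr q) * (1 - x) powr p + (1 + 2 powr p) * (1 + x) powr q"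
proof -
  have bound: "y powr r \<le> 1 + 2 powr r" if "1 \<le> y" "y \<le> 2" for y r :: real
  proof (cases "r \<ge> 0")
    case True
    then have "y powr r \<le> 2 powr r" using that by (intro powr_mono2) auto
    then show ?thesis by simp
  next
    case False
    then have "y powr r \<le> 1 powr r" using that by (intro powr_mono2') auto
    then show ?thesis by (simp add: add_increasing2)
  qed
  have "(1 - x) powr p \<ge> 0" "(1 + x) powr q \<ge> 0" "(0::real) \<le> 2 powr p" "(0::real) \<le> 2 powr q"
    by simp_all
  moreover have "jacobi_weight p q x \<le> (1 - x) powr p * (1 + 2 powr q)" if "x \<ge> 0"
    unfolding jacobi_weight_def using bound[of "1 + x" q] that assms by (intro mult_left_mono) auto
  moreover have "jacobi_weight p q x \<le> (1 + 2 powr p) * (1 + x) powr q" if "x < 0"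
    unfolding jacobi_weight_def using bound[of "1 - x" p] that assms by (intro mult_right_mono) auto
  ultimately show ?thesis
    by (smt (verit, best) mult_nonneg_nonneg mult.commute)
qed

lemma integrable_powr_sum:
  fixes A B p q :: real
  assumes "p > -1" and "q > -1"
  shows "(\<lambda>x. A * (1 - x) powr p + B * (1 + x) powr q) integrable_on {-1..1}"
proof -
  define G where "G x = - A / (p + 1) * (1 - x) powr (p + 1) + B / (q + 1) * (1 + x) powr (q + 1)"
    for x
  have cont: "continuous_on {-1..1} G"
    unfolding G_def using assms by (intro continuous_intros continuous_on_powr') auto
  have deriv: "(G has_vector_derivative (A * (1 - x) powr p + B * (1 + x) powr q)) (at x)"
    if "x \<in> {-1<..<1}" for x
  proof -
    have x: "1 - x > 0" "1 + x > 0" using that by auto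
    have "(G has_real_derivative
        - A / (p + 1) * ((p + 1) * (1 - x) powr (p + 1 - 1) * (- 1))
        + B / (q + 1) * ((q + 1) * (1 + x) powr (q + 1 - 1) * 1)) (at x)"
      unfolding G_def[abs_def] using x
      by (intro DERIV_add DERIV_cmult DERIV_fun_powr) (auto intro!: derivative_eq_intros)
    then show ?thesis using assms by (simp add: has_real_derivative_iff_has_vector_derivative)
  qed
  show ?thesis
    using fundamental_theorem_of_calculus_interior[of "-1" 1 G, OF _ cont deriv] by auto
qed

definition jacobi_dominated :: "real \<Rightarrow> real \<Rightarrow> (real \<Rightarrow> real) \<Rightarrow> bool" where
  "jacobi_dominated p q f \<longleftrightarrow>
     continuous_on {-1<..<1} f \<and> (\<exists>K. \<forall>x\<in>{-1<..<1}. \<bar>f x\<bar> \<le> K * jacobi_weight p q x)"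

lemma jacobi_dominated_integrable:
  assumes "p > -1" and "q > -1" and "jacobi_dominated p q f"
  shows "f integrable_on {-1..1}"
proof -
  obtain K where cont: "continuous_on {-1<..<1} f"
    and K: "\<And>x. x \<in> {-1<..<1} \<Longrightarrow> \<bar>f x\<bar> \<le> K * jacobi_weight p q x"
    using assms(3) unfolding jacobi_dominated_def by blast
  have "K \<ge> 0" using K[of 0] by (simp add: jacobi_weight_def)
  define g where
    "g x = (K * (1 + 2 powr q)) * (1 - x) powr p + (K * (1 + 2 powr p)) * (1 + x) powr q" for x
  have "g integrable_on {-1..1}"
    unfolding g_def by (rule integrable_powr_sum[OF assms(1,2)])
  then have g: "g integrable_on {-1<..<1}"
    by (rule integrable_spike_set) (auto intro: negligible_subset[of "{-1, 1}"])
  have "f integrable_on {-1<..<1}"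
  proof (rule measurable_bounded_by_integrable_imp_integrable[OF _ g])
    show "f \<in> borel_measurable (lebesgue_on {-1<..<1})"
      by (rule continuous_imp_measurable_on_sets_lebesgue[OF cont]) simp
    fix x :: real assume x: "x \<in> {-1<..<1}"
    have "\<bar>f x\<bar> \<le> K * ((1 + 2 powr q) * (1 - x) powr p + (1 + 2 powr p) * (1 + x) powr q)"
      using K[OF x] jacobi_weight_le[OF x, of p q] \<open>K \<ge> 0\<close> by (meson mult_left_mono order_trans)
    then show "norm (f x) \<le> g x" by (simp add: g_def algebra_simps)
  qed simp
  then show ?thesis
    by (rule integrable_spike_set) (auto intro: negligible_subset[of "{-1, 1}"])
qed

lemma continuous_on_closed_bounded:
  "continuous_on {-1..1::real} g \<Longrightarrow> \<exists>L. \<forall>x\<in>{-1..1}. \<bar>g x\<bar> \<le> (L::real)"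
  using compact_imp_bounded[OF compact_continuous_image[of "{-1..1}" g]]
  by (auto simp: bounded_real)

lemma jacobi_dominated_weighted:
  assumes "continuous_on {-1..1} g"
  shows "jacobi_dominated p q (\<lambda>x. g x * jacobi_weight p q x)"
proof -
  obtain L where L: "\<forall>x\<in>{-1..1}. \<bar>g x\<bar> \<le> L" using continuous_on_closed_bounded[OF assms] by blast
  have "\<bar>g x * jacobi_weight p q x\<bar> \<le> L * jacobi_weight p q x" if "x \<in> {-1<..<1}" for x
    using L that by (auto simp: abs_mult jacobi_weight_nonneg intro!: mult_right_mono)
  moreover have "continuous_on {-1<..<1} (\<lambda>x. g x * jacobi_weight p q x)"
    by (intro continuous_on_mult continuous_on_jacobi_weight_open continuous_on_subset[OF assms])
       auto
  ultimately show ?thesis unfolding jacobi_dominated_def by blast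
qed

lemma jacobi_dominated_mult_continuous:
  assumes f: "jacobi_dominated p q f" and g: "continuous_on {-1..1} g"
  shows "jacobi_dominated p q (\<lambda>x. f x * g x)"
proof -
  obtain K where K: "\<forall>x\<in>{-1<..<1}. \<bar>f x\<bar> \<le> K * jacobi_weight p q x"
    using f unfolding jacobi_dominated_def by blast
  obtain L where L: "\<forall>x\<in>{-1..1}. \<bar>g x\<bar> \<le> L" using continuous_on_closed_bounded[OF g] by blast
  have "\<bar>f x * g x\<bar> \<le> (K * L) * jacobi_weight p q x" if x: "x \<in> {-1<..<1}" for x
  proof -
    have "\<bar>f x\<bar> * \<bar>g x\<bar> \<le> (K * jacobi_weight p q x) * L"
      using K L x by (intro mult_mono) (auto intro: order_trans[OF abs_ge_zero])
    then show ?thesis by (simp add: abs_mult algebra_simps)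
  qed
  moreover have "continuous_on {-1<..<1} (\<lambda>x. f x * g x)"
    using f unfolding jacobi_dominated_def
    by (intro continuous_on_mult continuous_on_subset[OF g]) auto
  ultimately show ?thesis unfolding jacobi_dominated_def by blast
qed

lemma jacobi_dominated_lincomb:
  assumes f: "jacobi_dominated p q f" and g: "jacobi_dominated p q g"
  shows "jacobi_dominated p q (\<lambda>x. r * f x + s * g x)"
proof -
  obtain K L where K: "\<forall>x\<in>{-1<..<1}. \<bar>f x\<bar> \<le> K * jacobi_weight p q x"
    and L: "\<forall>x\<in>{-1<..<1}. \<bar>g x\<bar> \<le> L * jacobi_weight p q x"
    using f g unfolding jacobi_dominated_def by blast
  have "\<bar>r * f x + s * g x\<bar> \<le> (\<bar>r\<bar> * K + \<bar>s\<bar> * L) * jacobi_weight p q x" if "x \<in> {-1<..<1}" for x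
  proof -
    have "\<bar>r * f x + s * g x\<bar> \<le> \<bar>r\<bar> * \<bar>f x\<bar> + \<bar>s\<bar> * \<bar>g x\<bar>"
      by (metis abs_mult abs_triangle_ineq)
    also have "\<dots> \<le> \<bar>r\<bar> * (K * jacobi_weight p q x) + \<bar>s\<bar> * (L * jacobi_weight p q x)"
      using K L that by (intro add_mono mult_left_mono) auto
    finally show ?thesis by (simp add: algebra_simps)
  qed
  moreover have "continuous_on {-1<..<1} (\<lambda>x. r * f x + s * g x)"
    using f g unfolding jacobi_dominated_def by (intro continuous_intros) auto
  ultimately show ?thesis unfolding jacobi_dominated_def by blast
qed

lemma jacobi_dominated_cong:
  "(\<And>x. x \<in> {-1<..<1} \<Longrightarrow> f x = g x) \<Longrightarrow> jacobi_dominated p q f \<longleftrightarrow> jacobi_dominated p q g"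
proof -
  assume eq: "\<And>x. x \<in> {-1<..<1} \<Longrightarrow> f x = g x"
  then have "continuous_on {-1<..<1} f \<longleftrightarrow> continuous_on {-1<..<1} g"
    by (intro continuous_on_cong) auto
  then show ?thesis unfolding jacobi_dominated_def using eq by auto
qed

lemma integral_pos_if_pos_at:
  fixes f :: "real \<Rightarrow> real"
  assumes "f integrable_on {a..b}" and "continuous_on {a<..<b} f"
    and "\<And>x. x \<in> {a..b} \<Longrightarrow> f x \<ge> 0" and "x0 \<in> {a<..<b}" and "f x0 > 0"
  shows "integral {a..b} f > 0"
proof -
  define c d where "c = (a + x0) / 2" and "d = (x0 + b) / 2"
  have cd: "{c..d} \<subseteq> {a<..<b}" "c < d" "x0 \<in> {c..d}" "{c..d} \<subseteq> {a..b}"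
    using assms(4) by (auto simp: c_def d_def)
  have cont: "continuous_on {c..d} f" by (rule continuous_on_subset[OF assms(2) cd(1)])
  have "integral {c..d} f \<noteq> 0"
    using integral_eq_0_iff[OF cont cd(2)] assms(3,5) cd by fastforce
  moreover have "integral {c..d} f \<ge> 0"
    using cd assms(3) by (intro integral_nonneg integrable_continuous_interval cont) auto
  moreover have "integral {c..d} f \<le> integral {a..b} f"
    using cd(4) assms(3)
    by (intro integral_subset_le[OF _ integrable_continuous_interval[OF cont] assms(1)]) auto
  ultimately show ?thesis by linarith
qed

lemma integrable_on_jacobi_weighted:
  assumes "p > -1" and "q > -1" and "continuous_on {-1..1} g"
  shows "(\<lambda>x. g x * jacobi_weight p q x) integrable_on {-1..1}"
  by (rule jacobi_dominated_integrable[OF assms(1,2) jacobi_dominated_weighted[OF assms(3)]])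

lemma integral_by_parts_vanishing:
  assumes "continuous_on {-1..1} F" and "F (-1) = 0" and "F 1 = 0"
    and "\<And>x. x \<in> {-1<..<1} \<Longrightarrow> (F has_real_derivative (f x + g x)) (at x)"
    and "f integrable_on {-1..1}"
  shows "g integrable_on {-1..1}" and "integral {-1..1} g = - integral {-1..1} f"
proof -
  have fg: "((\<lambda>x. f x + g x) has_integral 0) {-1..1}"
    using fundamental_theorem_of_calculus_interior[of "-1" 1 F "\<lambda>x. f x + g x"] assms
    by (simp add: has_real_derivative_iff_has_vector_derivative)
  have "g = (\<lambda>x. (f x + g x) - f x)" by simp
  then show g: "g integrable_on {-1..1}"
    using fg assms(5) by (metis has_integral_integrable integrable_diff)
  show "integral {-1..1} g = - integral {-1..1} f"
    using integral_unique[OF fg] integral_add[OF assms(5) g] by simp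
qed

context
  fixes \<alpha> \<beta> :: real
  assumes \<alpha>\<beta>: "\<alpha> > -1" "\<beta> > -1"
begin

lemma jacobi_ode:
  assumes x: "x \<in> {-1<..<1}"
  shows "((\<lambda>x. jacobi_weight (\<alpha> + 1) (\<beta> + 1) x * deriv (jacobiP n \<alpha> \<beta>) x) has_real_derivative
           - (real n * (real n + \<alpha> + \<beta> + 1)) * (jacobi_weight \<alpha> \<beta> x * jacobiP n \<alpha> \<beta> x)) (at x)"
proof (cases n)
  case 0
  then show ?thesis by (simp add: jacobiP_0)
next
  case (Suc k)
  let ?Q = "jacobiP k (\<alpha> + 1) (\<beta> + 1)" and ?c = "(real n + \<alpha> + \<beta> + 1) / 2"
  have "((\<lambda>x. jacobi_weight (\<alpha> + 1) (\<beta> + 1) x * ?Q x) has_real_derivative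
      jacobi_weight \<alpha> \<beta> x * ((\<beta> + 1) * (1 - x) - (\<alpha> + 1) * (1 + x)) * ?Q x
      + deriv ?Q x * jacobi_weight (\<alpha> + 1) (\<beta> + 1) x) (at x)"
    using \<alpha>\<beta>
    by (intro DERIV_mult has_real_derivative_jacobi_weight[OF x] has_real_derivative_jacobiP) auto
  also have "jacobi_weight \<alpha> \<beta> x * ((\<beta> + 1) * (1 - x) - (\<alpha> + 1) * (1 + x)) * ?Q x
      + deriv ?Q x * jacobi_weight (\<alpha> + 1) (\<beta> + 1) x
      = jacobi_weight \<alpha> \<beta> x * (-2 * (real k + 1) * jacobiP n \<alpha> \<beta> x)"
  proof -
    have w: "jacobi_weight (\<alpha> + 1) (\<beta> + 1) x = (1 - x\<^sup>2) * jacobi_weight \<alpha> \<beta> x"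
      using x by (intro jacobi_weight_plus_1) auto
    have "jacobi_weight \<alpha> \<beta> x * ((\<beta> + 1) * (1 - x) - (\<alpha> + 1) * (1 + x)) * ?Q x
        + deriv ?Q x * jacobi_weight (\<alpha> + 1) (\<beta> + 1) x
        = jacobi_weight \<alpha> \<beta> x * ((1 - x\<^sup>2) * deriv ?Q x + ((\<beta> - \<alpha>) - (\<alpha> + \<beta> + 2) * x) * ?Q x)"
      unfolding w by (simp add: algebra_simps)
    then show ?thesis unfolding Suc jacobi_raising[OF \<alpha>\<beta>] .
  qed
  finally have "((\<lambda>x. ?c * (jacobi_weight (\<alpha> + 1) (\<beta> + 1) x * ?Q x)) has_real_derivative
      ?c * (jacobi_weight \<alpha> \<beta> x * (-2 * (real k + 1) * jacobiP n \<alpha> \<beta> x))) (at x)"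
    by (rule DERIV_cmult)
  moreover have "(\<lambda>x. jacobi_weight (\<alpha> + 1) (\<beta> + 1) x * deriv (jacobiP n \<alpha> \<beta>) x)
      = (\<lambda>x. ?c * (jacobi_weight (\<alpha> + 1) (\<beta> + 1) x * ?Q x))"
    unfolding Suc deriv_jacobiP_Suc[OF \<alpha>\<beta>] by (simp add: ac_simps)
  moreover have "?c * (jacobi_weight \<alpha> \<beta> x * (-2 * (real k + 1) * jacobiP n \<alpha> \<beta> x))
      = - (real n * (real n + \<alpha> + \<beta> + 1)) * (jacobi_weight \<alpha> \<beta> x * jacobiP n \<alpha> \<beta> x)"
    by (simp add: Suc field_simps)
  ultimately show ?thesis by simp
qed

lemma integrable_jacobi_product:
  "(\<lambda>x. jacobiP n \<alpha> \<beta> x * jacobiP m \<alpha> \<beta> x * jacobi_weight \<alpha> \<beta> x) integrable_on {-1..1}"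
  using \<alpha>\<beta> by (intro integrable_on_jacobi_weighted continuous_intros continuous_on_jacobiP)

lemma integral_jacobi_deriv_product:
  "integral {-1..1}
     (\<lambda>x. jacobi_weight (\<alpha> + 1) (\<beta> + 1) x * deriv (jacobiP n \<alpha> \<beta>) x * deriv (jacobiP m \<alpha> \<beta>) x)
   = real n * (real n + \<alpha> + \<beta> + 1)
     * integral {-1..1} (\<lambda>x. jacobiP n \<alpha> \<beta> x * jacobiP m \<alpha> \<beta> x * jacobi_weight \<alpha> \<beta> x)"
proof -
  let ?F = "\<lambda>x. jacobi_weight (\<alpha> + 1) (\<beta> + 1) x * deriv (jacobiP n \<alpha> \<beta>) x * jacobiP m \<alpha> \<beta> x"
  let ?f = "\<lambda>x. - (real n * (real n + \<alpha> + \<beta> + 1))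
              * (jacobiP n \<alpha> \<beta> x * jacobiP m \<alpha> \<beta> x * jacobi_weight \<alpha> \<beta> x)"
  have cont: "continuous_on {-1..1} ?F"
    using \<alpha>\<beta> by (intro continuous_on_mult continuous_on_jacobi_weight continuous_on_deriv_jacobiP
        continuous_on_jacobiP) auto
  have deriv: "(?F has_real_derivative (?f x
      + jacobi_weight (\<alpha> + 1) (\<beta> + 1) x * deriv (jacobiP n \<alpha> \<beta>) x * deriv (jacobiP m \<alpha> \<beta>) x))
      (at x)"
    if "x \<in> {-1<..<1}" for x
    using DERIV_mult[OF jacobi_ode[OF that, of n] has_real_derivative_jacobiP[OF \<alpha>\<beta>, of m x]]
    by (simp add: algebra_simps)
  have "?f integrable_on {-1..1}"
    by (intro integrable_on_mult_right integrable_jacobi_product)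
  from integral_by_parts_vanishing(2)[OF cont _ _ deriv this] show ?thesis
    by (simp add: jacobi_weight_endpoints)
qed

lemma jacobi_orthogonal:
  assumes "n \<noteq> m"
  shows "integral {-1..1} (\<lambda>x. jacobiP n \<alpha> \<beta> x * jacobiP m \<alpha> \<beta> x * jacobi_weight \<alpha> \<beta> x) = 0"
proof -
  let ?I = "integral {-1..1} (\<lambda>x. jacobiP n \<alpha> \<beta> x * jacobiP m \<alpha> \<beta> x * jacobi_weight \<alpha> \<beta> x)"
  have "real n * (real n + \<alpha> + \<beta> + 1) * ?I = real m * (real m + \<alpha> + \<beta> + 1) * ?I"
    using integral_jacobi_deriv_product[of n m] integral_jacobi_deriv_product[of m n]
    by (simp add: ac_simps)
  then have "(real n - real m) * (real n + real m + \<alpha> + \<beta> + 1) * ?I = 0"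
    by (simp add: algebra_simps)
  moreover have "real n + real m + \<alpha> + \<beta> + 1 > 0" using assms \<alpha>\<beta> by linarith
  ultimately show ?thesis using assms by simp
qed

lemma jacobi_h_pos: "jacobi_h n \<alpha> \<beta> > 0"
proof -
  have "jacobiP n \<alpha> \<beta> 1 = (real n + \<alpha>) gchoose n"
    unfolding jacobiP_def by (simp add: zero_power sum.atMost_shift)
  then have "jacobiP n \<alpha> \<beta> 1 > 0"
    using \<alpha>\<beta> unfolding gbinomial_pochhammer' by (auto intro!: divide_pos_pos pochhammer_pos)
  with continuous_on_jacobiP[of UNIV n \<alpha> \<beta>]
  have "eventually (\<lambda>x. jacobiP n \<alpha> \<beta> x > 0) (at_left (1::real))"
    by (intro order_tendstoD(1)) (simp_all add: continuous_on_def filterlim_at_split)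
  then obtain b where b: "b < 1" "\<And>y. b < y \<Longrightarrow> y < 1 \<Longrightarrow> jacobiP n \<alpha> \<beta> y > 0"
    unfolding eventually_at_left_field by blast
  define x0 where "x0 = (max b 0 + 1) / 2"
  have x0: "x0 \<in> {-1<..<1}" "jacobiP n \<alpha> \<beta> x0 > 0"
    using b unfolding x0_def by (auto simp: max_def)
  show ?thesis
    unfolding jacobi_h_def
  proof (rule integral_pos_if_pos_at[OF _ _ _ x0(1)])
    show "(\<lambda>x. (jacobiP n \<alpha> \<beta> x)\<^sup>2 * jacobi_weight \<alpha> \<beta> x) integrable_on {-1..1}"
      using integrable_jacobi_product[of n n] by (simp add: power2_eq_square)
    show "continuous_on {-1<..<1} (\<lambda>x. (jacobiP n \<alpha> \<beta> x)\<^sup>2 * jacobi_weight \<alpha> \<beta> x)"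
      by (intro continuous_intros continuous_on_jacobiP continuous_on_jacobi_weight_open)
  qed (use x0 jacobi_weight_pos jacobi_weight_nonneg in auto)
qed

end

section \<open>The operator \<open>\<epsilon>\<close>\<close>

lemma eps_op_eq_integral:
  assumes g: "g integrable_on {-1..1}" and x: "x \<in> {-1..1}"
  shows "eps_op g x = integral {-1..x} g - integral {-1..1} g / 2"
proof -
  have g1: "g integrable_on {-1..x}" by (rule integrable_subinterval_real[OF g]) (use x in auto)
  have g2: "g integrable_on {x..1}" by (rule integrable_subinterval_real[OF g]) (use x in auto)
  have i1: "((\<lambda>y. 1 / 2 * sgn (x - y) * g y) has_integral (1 / 2 * integral {-1..x} g)) {-1..x}"
  proof (rule has_integral_spike_finite[of "{x}"])
    show "((\<lambda>y. 1 / 2 * g y) has_integral (1 / 2 * integral {-1..x} g)) {-1..x}"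
      using has_integral_mult_right[OF integrable_integral[OF g1], of "1 / 2"] by simp
  qed auto
  have i2: "((\<lambda>y. 1 / 2 * sgn (x - y) * g y) has_integral (- 1 / 2 * integral {x..1} g)) {x..1}"
  proof (rule has_integral_spike_finite[of "{x}"])
    show "((\<lambda>y. - 1 / 2 * g y) has_integral (- 1 / 2 * integral {x..1} g)) {x..1}"
      using has_integral_mult_right[OF integrable_integral[OF g2], of "-1 / 2"] by simp
  qed auto
  have "((\<lambda>y. 1 / 2 * sgn (x - y) * g y) has_integral
      (1 / 2 * integral {-1..x} g + - 1 / 2 * integral {x..1} g)) {-1..1}"
    by (rule has_integral_combine[OF _ _ i1 i2]) (use x in auto)
  then have "eps_op g x = 1 / 2 * integral {-1..x} g + - 1 / 2 * integral {x..1} g"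
    unfolding eps_op_def by (rule integral_unique)
  moreover have "integral {-1..x} g + integral {x..1} g = integral {-1..1} g"
    by (rule Henstock_Kurzweil_Integration.integral_combine[OF _ _ g]) (use x in auto)
  ultimately show ?thesis by simp
qed

lemma continuous_on_eps_op:
  assumes "g integrable_on {-1..1}"
  shows "continuous_on {-1..1} (eps_op g)"
proof -
  have "continuous_on {-1..1} (\<lambda>x. integral {-1..x} g - integral {-1..1} g / 2)"
    by (intro continuous_intros indefinite_integral_continuous_1 assms)
  then show ?thesis by (rule continuous_on_eq) (simp add: eps_op_eq_integral[OF assms])
qed

lemma eps_op_endpoints:
  assumes "g integrable_on {-1..1}"
  shows "eps_op g 1 = integral {-1..1} g / 2" and "eps_op g (-1) = - integral {-1..1} g / 2"
  using eps_op_eq_integral[OF assms, of 1] eps_op_eq_integral[OF assms, of "-1"] by auto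

lemma has_real_derivative_eps_op:
  assumes g: "g integrable_on {-1..1}" and "continuous_on {-1<..<1} g" and x: "x \<in> {-1<..<1}"
  shows "(eps_op g has_real_derivative g x) (at x)"
proof -
  have "continuous (at x within {-1..1}) g"
    using continuous_on_interior[OF assms(2), of x] x
    by (simp add: continuous_at_imp_continuous_at_within)
  then have "((\<lambda>u. integral {-1..u} g) has_vector_derivative g x) (at x within {-1..1})"
    using integral_has_vector_derivative_continuous_at[OF g, of x "{}"] x by simp
  then have "((\<lambda>u. integral {-1..u} g) has_real_derivative g x) (at x)"
    using at_within_interior[of x "{-1..1}"] x
    by (simp add: has_real_derivative_iff_has_vector_derivative)
  then have "((\<lambda>u. integral {-1..u} g - integral {-1..1} g / 2) has_real_derivative g x) (at x)"
    by (auto intro!: derivative_eq_intros)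
  then show ?thesis
    by (rule has_field_derivative_transform_within_open[of _ _ _ "{-1<..<1}"])
       (use x eps_op_eq_integral[OF g] in auto)
qed

lemma eps_op_lincomb:
  assumes f: "f integrable_on {-1..1}" and g: "g integrable_on {-1..1}" and x: "x \<in> {-1..1}"
  shows "eps_op (\<lambda>y. r * f y + s * g y) x = r * eps_op f x + s * eps_op g x"
proof -
  have h: "(\<lambda>y. r * f y + s * g y) integrable_on {-1..1}"
    by (intro integrable_add integrable_on_mult_right f g)
  have "f integrable_on {-1..x}" "g integrable_on {-1..x}"
    using x by (auto intro: integrable_subinterval_real[OF f] integrable_subinterval_real[OF g])
  then show ?thesis
    unfolding eps_op_eq_integral[OF h x] eps_op_eq_integral[OF f x] eps_op_eq_integral[OF g x]
    using f g by (simp add: integral_add integrable_on_mult_right algebra_simps)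
qed

lemma eps_op_of_derivative:
  assumes F: "continuous_on {-1..1} F" and "F (-1) = 0" and "F 1 = 0"
    and F': "\<And>x. x \<in> {-1<..<1} \<Longrightarrow> (F has_real_derivative f x) (at x)"
  shows "f integrable_on {-1..1}" and "\<And>x. x \<in> {-1..1} \<Longrightarrow> eps_op f x = F x"
proof -
  have FTC: "(f has_integral (F x - F (-1))) {-1..x}" if x: "x \<in> {-1..1}" for x
  proof (rule fundamental_theorem_of_calculus_interior)
    show "continuous_on {-1..x} F" by (rule continuous_on_subset[OF F]) (use x in auto)
    show "(F has_vector_derivative f y) (at y)" if "y \<in> {-1<..<x}" for y
      using F'[of y] that x by (simp add: has_real_derivative_iff_has_vector_derivative)
  qed (use x in auto)
  show f: "f integrable_on {-1..1}" using FTC[of 1] by auto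
  show "eps_op f x = F x" if x: "x \<in> {-1..1}" for x
    unfolding eps_op_eq_integral[OF f x]
    using integral_unique[OF FTC[OF x]] integral_unique[OF FTC[of 1]] assms by simp
qed

text \<open>The product \<open>(eps_op f) (eps_op g)\<close> has derivative
  \<open>f (eps_op g) + g (eps_op f)\<close> and takes the same value at both endpoints.\<close>

lemma integral_eps_op_skew:
  assumes f: "f integrable_on {-1..1}" "continuous_on {-1<..<1} f"
    and g: "g integrable_on {-1..1}" "continuous_on {-1<..<1} g"
    and fg: "(\<lambda>x. f x * eps_op g x) integrable_on {-1..1}"
    and gf: "(\<lambda>x. g x * eps_op f x) integrable_on {-1..1}"
  shows "integral {-1..1} (\<lambda>x. f x * eps_op g x) = - integral {-1..1} (\<lambda>x. g x * eps_op f x)"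
proof -
  let ?F = "\<lambda>x. eps_op f x * eps_op g x"
  have "continuous_on {-1..1} ?F"
    by (intro continuous_on_mult continuous_on_eps_op f g)
  moreover have "(?F has_vector_derivative (f x * eps_op g x + g x * eps_op f x)) (at x)"
    if "x \<in> {-1<..<1}" for x
    using DERIV_mult[OF has_real_derivative_eps_op[OF f that] has_real_derivative_eps_op[OF g that]]
    by (simp add: has_real_derivative_iff_has_vector_derivative algebra_simps)
  ultimately have "((\<lambda>x. f x * eps_op g x + g x * eps_op f x) has_integral ?F 1 - ?F (-1)) {-1..1}"
    by (intro fundamental_theorem_of_calculus_interior) auto
  moreover have "?F 1 - ?F (-1) = 0" by (simp add: eps_op_endpoints f g)
  ultimately have "integral {-1..1} (\<lambda>x. f x * eps_op g x + g x * eps_op f x) = 0"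
    by (simp add: integral_unique)
  then show ?thesis using integral_add[OF fg gf] by simp
qed

section \<open>The matrix \<open>J\<close>\<close>

definition symplectic_J :: "nat \<Rightarrow> nat \<Rightarrow> real" where
  "symplectic_J j k =
     (if even j then (if k = j + 1 then 1 else 0) else (if k + 1 = j then -1 else 0))"

lemma sum_if_eq_mult:
  fixes p N :: nat
  assumes "p < N"
  shows "(\<Sum>l<N. (if l = p then c else 0) * f l) = c * (f p :: real)"
proof -
  have "(\<Sum>l<N. (if l = p then c else 0) * f l) = (\<Sum>l<N. if l = p then c * f p else 0)"
    by (rule sum.cong) auto
  then show ?thesis using assms by simp
qed

lemma sum_symplectic_J_row:
  assumes "even N" and "j < N"
  shows "(\<Sum>k<N. symplectic_J j k * f k) = (if even j then f (Suc j) else - f (j - 1))"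
proof (cases "even j")
  case True
  then have "Suc j < N" using assms by (metis Suc_lessI even_Suc)
  moreover have "symplectic_J j k = (if k = Suc j then 1 else 0)" for k
    using True by (simp add: symplectic_J_def)
  ultimately show ?thesis using True by (simp add: sum_if_eq_mult)
next
  case False
  then have "j \<noteq> 0" by (rule contrapos_nn) simp
  then have "j - 1 < N" using assms by simp
  moreover have "symplectic_J j k = (if k = j - 1 then -1 else 0)" for k
    using False \<open>j \<noteq> 0\<close> by (auto simp: symplectic_J_def)
  ultimately show ?thesis using False by (simp add: sum_if_eq_mult)
qed

lemma symplectic_J_squared:
  assumes "even N" and "j < N" and "k < N"
  shows "(\<Sum>l<N. symplectic_J j l * symplectic_J l k) = - (if j = k then 1 else 0)"
  unfolding sum_symplectic_J_row[OF assms(1,2)]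
proof (cases "even j")
  case False
  then have "j \<noteq> 0" "even (j - 1)" "j - 1 + 1 = j" by (cases j; simp)+
  then show "(if even j then symplectic_J (Suc j) k else - symplectic_J (j - 1) k)
      = - (if j = k then 1 else 0)"
    using False by (auto simp: symplectic_J_def)
qed (auto simp: symplectic_J_def)

lemma is_inverse_mat_symplectic_J:
  "even N \<Longrightarrow> is_inverse_mat N symplectic_J (\<lambda>j k. - symplectic_J j k)"
  unfolding is_inverse_mat_def by (simp add: sum_negf symplectic_J_squared)

lemma is_inverse_mat_unique:
  assumes \<nu>: "is_inverse_mat N M \<nu>" and \<mu>: "is_inverse_mat N M \<mu>" and "j < N" and "k < N"
  shows "\<nu> j k = \<mu> j k"
proof -
  have "\<nu> j k = (\<Sum>l<N. (if l = k then 1 else 0) * \<nu> j l)"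
    using \<open>k < N\<close> by (simp add: sum_if_eq_mult)
  also have "\<dots> = (\<Sum>l<N. \<nu> j l * (\<Sum>p<N. M l p * \<mu> p k))"
    using \<mu> \<open>k < N\<close> unfolding is_inverse_mat_def by (intro sum.cong) auto
  also have "\<dots> = (\<Sum>l<N. \<Sum>p<N. \<nu> j l * M l p * \<mu> p k)"
    by (simp add: sum_distrib_left mult.assoc)
  also have "\<dots> = (\<Sum>p<N. \<Sum>l<N. \<nu> j l * M l p * \<mu> p k)"
    by (rule sum.swap)
  also have "\<dots> = (\<Sum>p<N. (\<Sum>l<N. \<nu> j l * M l p) * \<mu> p k)"
    by (simp add: sum_distrib_right)
  also have "\<dots> = (\<Sum>p<N. (if p = j then 1 else 0) * \<mu> p k)"
    using \<nu> \<open>j < N\<close> unfolding is_inverse_mat_def by (intro sum.cong) auto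
  also have "\<dots> = \<mu> j k"
    using \<open>j < N\<close> by (simp add: sum_if_eq_mult)
  finally show ?thesis .
qed

lemma sum_lessThan_pairs:
  "(\<Sum>j<2 * m. f j) = (\<Sum>i<m. f (2 * i) + f (Suc (2 * i)) :: 'a :: comm_monoid_add)"
  by (induction m) (simp_all add: add_ac)

section \<open>The ladder relation and the kernel\<close>

definition up_coeff :: "real \<Rightarrow> real \<Rightarrow> nat \<Rightarrow> real" where
  "up_coeff a b j = jacobi_delta (a + 1) (b + 1) j
     * sqrt (jacobi_h (Suc j) (a + 1) (b + 1)) / sqrt (jacobi_h j (a + 1) (b + 1))"

definition down_coeff :: "real \<Rightarrow> real \<Rightarrow> nat \<Rightarrow> real" where
  "down_coeff a b j = jacobi_gamma (a + 1) (b + 1) j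
     * sqrt (jacobi_h (j - 1) (a + 1) (b + 1)) / sqrt (jacobi_h j (a + 1) (b + 1))"

lemma down_coeff_0: "down_coeff a b 0 = 0"
  unfolding down_coeff_def jacobi_gamma_def by simp

lemma psi1_even: "even j \<Longrightarrow> psi1 a b j = phi1 a b j"
  unfolding psi1_def[abs_def] by simp

lemma phi1_eq:
  "phi1 a b j x
     = jacobiP j (a + 1) (b + 1) x / sqrt (jacobi_h j (a + 1) (b + 1))
       * jacobi_weight (a / 2) (b / 2) x"
  unfolding phi1_def jacobi_weight_def by simp

lemma omega_phi1_eq:
  assumes "x \<in> {-1..1}"
  shows "(1 - x\<^sup>2) * phi1 a b j x
       = jacobiP j (a + 1) (b + 1) x / sqrt (jacobi_h j (a + 1) (b + 1))
         * jacobi_weight (a / 2 + 1) (b / 2 + 1) x"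
  unfolding phi1_eq jacobi_weight_plus_1[OF assms] by simp

context
  fixes a b :: real
  assumes ab: "a > -2" "b > -2"
begin

lemma ab_plus_1: "a + 1 > -1" "b + 1 > -1"
  using ab by auto

lemma jacobi_h_plus_1_pos: "jacobi_h j (a + 1) (b + 1) > 0"
  by (rule jacobi_h_pos[OF ab_plus_1])

lemma jacobi_dominated_phi1: "jacobi_dominated (a / 2) (b / 2) (phi1 a b j)"
proof -
  have "jacobi_dominated (a / 2) (b / 2)
      (\<lambda>x. jacobiP j (a + 1) (b + 1) x / sqrt (jacobi_h j (a + 1) (b + 1))
        * jacobi_weight (a / 2) (b / 2) x)"
    using jacobi_h_plus_1_pos[of j]
    by (intro jacobi_dominated_weighted continuous_intros continuous_on_jacobiP) auto
  then show ?thesis by (simp add: phi1_eq[abs_def])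
qed

lemma integrable_phi1: "phi1 a b j integrable_on {-1..1}"
  by (rule jacobi_dominated_integrable[OF _ _ jacobi_dominated_phi1]) (use ab in auto)

lemma continuous_on_omega_phi1: "continuous_on {-1..1} (\<lambda>x. (1 - x\<^sup>2) * phi1 a b j x)"
proof -
  have "continuous_on {-1..1} (\<lambda>x. jacobiP j (a + 1) (b + 1) x / sqrt (jacobi_h j (a + 1) (b + 1))
      * jacobi_weight (a / 2 + 1) (b / 2 + 1) x)"
    using ab jacobi_h_plus_1_pos[of j]
    by (intro continuous_intros continuous_on_jacobiP continuous_on_jacobi_weight) auto
  then show ?thesis by (rule continuous_on_eq) (simp add: omega_phi1_eq)
qed

lemma phi1_omega_phi1_eq:
  assumes "x \<in> {-1..1}"
  shows "phi1 a b j x * ((1 - x\<^sup>2) * phi1 a b k x)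
       = jacobiP j (a + 1) (b + 1) x * jacobiP k (a + 1) (b + 1) x * jacobi_weight (a + 1) (b + 1) x
         / (sqrt (jacobi_h j (a + 1) (b + 1)) * sqrt (jacobi_h k (a + 1) (b + 1)))"
proof -
  have w: "jacobi_weight (a / 2) (b / 2) x * jacobi_weight (a / 2 + 1) (b / 2 + 1) x
      = jacobi_weight (a + 1) (b + 1) x"
    using jacobi_weight_mult[OF assms, of "a / 2" "b / 2" "a / 2 + 1" "b / 2 + 1"] by simp
  show ?thesis
    unfolding omega_phi1_eq[OF assms] unfolding phi1_eq w[symmetric] by simp
qed

lemma integrable_phi1_omega_phi1:
  "(\<lambda>x. phi1 a b j x * ((1 - x\<^sup>2) * phi1 a b k x)) integrable_on {-1..1}"
proof -
  have "(\<lambda>x. jacobiP j (a + 1) (b + 1) x * jacobiP k (a + 1) (b + 1) x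
      * jacobi_weight (a + 1) (b + 1) x
      / (sqrt (jacobi_h j (a + 1) (b + 1)) * sqrt (jacobi_h k (a + 1) (b + 1))))
      integrable_on {-1..1}"
    using integrable_jacobi_product[OF ab_plus_1, of j k] by (rule integrable_on_divide)
  then show ?thesis by (rule integrable_eq) (simp add: phi1_omega_phi1_eq)
qed

lemma integral_phi1_omega_phi1:
  "integral {-1..1} (\<lambda>x. phi1 a b j x * ((1 - x\<^sup>2) * phi1 a b k x)) = (if j = k then 1 else 0)"
proof -
  have "integral {-1..1} (\<lambda>x. phi1 a b j x * ((1 - x\<^sup>2) * phi1 a b k x))
      = integral {-1..1} (\<lambda>x. jacobiP j (a + 1) (b + 1) x * jacobiP k (a + 1) (b + 1) x
          * jacobi_weight (a + 1) (b + 1) x)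
        / (sqrt (jacobi_h j (a + 1) (b + 1)) * sqrt (jacobi_h k (a + 1) (b + 1)))"
    by (subst integral_cong[OF phi1_omega_phi1_eq]) simp_all
  also have "\<dots> = (if j = k then 1 else 0)"
  proof (cases "j = k")
    case True
    then show ?thesis
      using jacobi_h_plus_1_pos[of j] by (simp add: jacobi_h_def power2_eq_square)
  next
    case False
    then show ?thesis by (simp add: jacobi_orthogonal[OF ab_plus_1])
  qed
  finally show ?thesis .
qed

lemma has_real_derivative_omega_phi1:
  assumes x: "x \<in> {-1<..<1}"
  shows "((\<lambda>t. (1 - t\<^sup>2) * phi1 a b j t) has_real_derivative
           down_coeff a b j * phi1 a b (j - 1) x - up_coeff a b j * phi1 a b (Suc j) x) (at x)"
proof -
  let ?P = "jacobiP j (a + 1) (b + 1)" and ?s = "sqrt (jacobi_h j (a + 1) (b + 1))"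
    and ?w = "jacobi_weight (a / 2) (b / 2) x"
  have "((\<lambda>t. ?P t / ?s * jacobi_weight (a / 2 + 1) (b / 2 + 1) t) has_real_derivative
      deriv ?P x / ?s * jacobi_weight (a / 2 + 1) (b / 2 + 1) x
      + ?w * ((b / 2 + 1) * (1 - x) - (a / 2 + 1) * (1 + x)) * (?P x / ?s)) (at x)"
    by (intro DERIV_mult DERIV_cdivide has_real_derivative_jacobiP[OF ab_plus_1]
        has_real_derivative_jacobi_weight[OF x])
  also have "deriv ?P x / ?s * jacobi_weight (a / 2 + 1) (b / 2 + 1) x
      + ?w * ((b / 2 + 1) * (1 - x) - (a / 2 + 1) * (1 + x)) * (?P x / ?s)
      = ?w / ?s * ((1 - x\<^sup>2) * deriv ?P x
          + (((b + 1) - (a + 1)) / 2 - ((a + 1) + (b + 1) + 2) / 2 * x) * ?P x)"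
  proof -
    have w: "jacobi_weight (a / 2 + 1) (b / 2 + 1) x = (1 - x\<^sup>2) * ?w"
      using x by (intro jacobi_weight_plus_1) auto
    have c: "(b / 2 + 1) * (1 - x) - (a / 2 + 1) * (1 + x)
        = ((b + 1) - (a + 1)) / 2 - ((a + 1) + (b + 1) + 2) / 2 * x"
      by (simp add: field_simps)
    have "\<And>D s \<Omega> W c Q :: real. D / s * (\<Omega> * W) + W * c * (Q / s) = W / s * (\<Omega> * D + c * Q)"
      by (simp add: field_simps add_divide_distrib)
    then show ?thesis unfolding w c .
  qed
  also have "\<dots> = ?w / ?s * (jacobi_gamma (a + 1) (b + 1) j * jacobiP (j - 1) (a + 1) (b + 1) x
      - jacobi_delta (a + 1) (b + 1) j * jacobiP (Suc j) (a + 1) (b + 1) x)"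
    unfolding jacobi_structure_relation[OF ab_plus_1] ..
  also have "\<dots> = down_coeff a b j * phi1 a b (j - 1) x - up_coeff a b j * phi1 a b (Suc j) x"
    unfolding down_coeff_def up_coeff_def phi1_eq
    using jacobi_h_plus_1_pos[of j] jacobi_h_plus_1_pos[of "j - 1"] jacobi_h_plus_1_pos[of "Suc j"]
    by (simp add: field_simps)
  finally show ?thesis
    by (rule has_field_derivative_transform_within_open[of _ _ _ "{-1<..<1}"])
       (use x in \<open>auto simp: omega_phi1_eq\<close>)
qed

lemma up_coeff_pos: "up_coeff a b j > 0"
proof -
  have "jacobi_delta (a + 1) (b + 1) j > 0"
    unfolding jacobi_delta_def using ab by (auto intro!: divide_pos_pos mult_pos_pos)
  then show ?thesis unfolding up_coeff_def using jacobi_h_plus_1_pos by simp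
qed

text \<open>Integrating \<open>((1-x^2) phi_j) ((1-x^2) phi_(j+1))\<close> by parts against the ladder relation.\<close>

lemma down_coeff_Suc: "down_coeff a b (Suc j) = up_coeff a b j"
proof -
  let ?F = "\<lambda>x. ((1 - x\<^sup>2) * phi1 a b j x) * ((1 - x\<^sup>2) * phi1 a b (Suc j) x)"
  let ?f = "\<lambda>x. (down_coeff a b j * phi1 a b (j - 1) x - up_coeff a b j * phi1 a b (Suc j) x)
              * ((1 - x\<^sup>2) * phi1 a b (Suc j) x)"
  let ?g = "\<lambda>x. (1 - x\<^sup>2) * phi1 a b j x
              * (down_coeff a b (Suc j) * phi1 a b j x
                 - up_coeff a b (Suc j) * phi1 a b (Suc (Suc j)) x)"
  have cont: "continuous_on {-1..1} ?F" by (intro continuous_on_mult continuous_on_omega_phi1)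
  have deriv: "(?F has_real_derivative (?f x + ?g x)) (at x)" if "x \<in> {-1<..<1}" for x
    using DERIV_mult[OF has_real_derivative_omega_phi1[OF that, of j]
        has_real_derivative_omega_phi1[OF that, of "Suc j"]]
    by (simp add: algebra_simps)
  have f: "?f = (\<lambda>x. down_coeff a b j * (phi1 a b (j - 1) x * ((1 - x\<^sup>2) * phi1 a b (Suc j) x))
      - up_coeff a b j * (phi1 a b (Suc j) x * ((1 - x\<^sup>2) * phi1 a b (Suc j) x)))"
    by (auto simp: algebra_simps)
  have g: "?g = (\<lambda>x. down_coeff a b (Suc j) * (phi1 a b j x * ((1 - x\<^sup>2) * phi1 a b j x))
      - up_coeff a b (Suc j) * (phi1 a b (Suc (Suc j)) x * ((1 - x\<^sup>2) * phi1 a b j x)))"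
    by (auto simp: algebra_simps)
  have "?f integrable_on {-1..1}"
    unfolding f by (intro integrable_diff integrable_on_mult_right integrable_phi1_omega_phi1)
  from integral_by_parts_vanishing(2)[OF cont _ _ deriv this]
  have "integral {-1..1} ?g = - integral {-1..1} ?f" by simp
  moreover have "integral {-1..1} ?f = - up_coeff a b j"
    unfolding f by (simp add: integral_diff integrable_on_mult_right integrable_phi1_omega_phi1
        integral_phi1_omega_phi1)
  moreover have "integral {-1..1} ?g = down_coeff a b (Suc j)"
    unfolding g by (simp add: integral_diff integrable_on_mult_right integrable_phi1_omega_phi1
        integral_phi1_omega_phi1)
  ultimately show ?thesis by simp
qed

lemma up_coeff_eq_C1:
  assumes "N \<ge> 2"
  shows "up_coeff a b (N - 1) = C1 a b N"
proof -
  have N: "Suc (N - 1) = N" "N - 1 \<noteq> 0" "N \<noteq> 0" "real (N - 1) = real N - 1"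
    using assms by auto
  have "up_coeff a b (N - 1) * up_coeff a b (N - 1) = up_coeff a b (N - 1) * down_coeff a b N"
    using down_coeff_Suc[of "N - 1"] N by simp
  also have "\<dots> = jacobi_delta (a + 1) (b + 1) (N - 1) * jacobi_gamma (a + 1) (b + 1) N"
    unfolding up_coeff_def down_coeff_def
    using jacobi_h_plus_1_pos[of N] jacobi_h_plus_1_pos[of "N - 1"] N by (simp add: field_simps)
  also have "\<dots> = real N * (real N + a + 1) * (real N + b + 1) * (real N + a + b + 2)
      / ((2 * real N + a + b + 1) * (2 * real N + a + b + 3))"
    unfolding jacobi_delta_def jacobi_gamma_def using N by (simp add: field_simps)
  finally have "C1 a b N = sqrt (up_coeff a b (N - 1) * up_coeff a b (N - 1))"
    unfolding C1_def by simp
  then show ?thesis using up_coeff_pos[of "N - 1"] by simp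
qed

lemma psi1_odd:
  assumes "x \<in> {-1<..<1}"
  shows "psi1 a b (Suc (2 * i)) x
       = down_coeff a b (2 * i) * phi1 a b (2 * i - 1) x
         - up_coeff a b (2 * i) * phi1 a b (Suc (2 * i)) x"
  unfolding psi1_def
  using DERIV_imp_deriv[OF has_real_derivative_omega_phi1[OF assms, of "2 * i"]] by simp

lemma eps_op_psi1_odd:
  assumes "x \<in> {-1..1}"
  shows "eps_op (psi1 a b (Suc (2 * i))) x = (1 - x\<^sup>2) * phi1 a b (2 * i) x"
  using eps_op_of_derivative(2)[OF continuous_on_omega_phi1 _ _ _ assms]
    has_real_derivative_omega_phi1 psi1_odd by simp

lemma jacobi_dominated_psi1: "jacobi_dominated (a / 2) (b / 2) (psi1 a b j)"
proof (cases "even j")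
  case True
  then show ?thesis by (simp add: psi1_even jacobi_dominated_phi1)
next
  case False
  then obtain i where j: "j = Suc (2 * i)" by (metis oddE Suc_eq_plus1)
  have "jacobi_dominated (a / 2) (b / 2)
      (\<lambda>x. down_coeff a b (2 * i) * phi1 a b (2 * i - 1) x
        + (- up_coeff a b (2 * i)) * phi1 a b (Suc (2 * i)) x)"
    by (intro jacobi_dominated_lincomb jacobi_dominated_phi1)
  then show ?thesis unfolding j by (subst jacobi_dominated_cong) (auto simp: psi1_odd)
qed

lemma integrable_psi1: "psi1 a b j integrable_on {-1..1}"
  by (rule jacobi_dominated_integrable[OF _ _ jacobi_dominated_psi1]) (use ab in auto)

lemma integrable_mult_eps_op:
  assumes "jacobi_dominated (a / 2) (b / 2) f" and "g integrable_on {-1..1}"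
  shows "(\<lambda>x. f x * eps_op g x) integrable_on {-1..1}"
  by (rule jacobi_dominated_integrable[OF _ _ jacobi_dominated_mult_continuous[OF
        assms(1) continuous_on_eps_op[OF assms(2)]]]) (use ab in auto)

lemma M1_skew: "M1 a b k j = - M1 a b j k"
  unfolding M1_def
  using jacobi_dominated_psi1[of j] jacobi_dominated_psi1[of k] unfolding jacobi_dominated_def
  by (intro integral_eps_op_skew integrable_psi1 integrable_mult_eps_op jacobi_dominated_psi1) auto

lemma eps_op_phi1_ladder:
  assumes "x \<in> {-1..1}"
  shows "down_coeff a b k * eps_op (phi1 a b (k - 1)) x
         - up_coeff a b k * eps_op (phi1 a b (Suc k)) x
       = (1 - x\<^sup>2) * phi1 a b k x"
proof -
  have "eps_op (\<lambda>y. down_coeff a b k * phi1 a b (k - 1) y + (- up_coeff a b k) * phi1 a b (Suc k) y)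
      x
      = (1 - x\<^sup>2) * phi1 a b k x"
    using has_real_derivative_omega_phi1[of _ k]
    by (intro eps_op_of_derivative(2)[OF continuous_on_omega_phi1 _ _ _ assms]) auto
  then show ?thesis unfolding eps_op_lincomb[OF integrable_phi1 integrable_phi1 assms] by simp
qed

lemma integral_phi1_eps_phi1_ladder:
  "down_coeff a b k * integral {-1..1} (\<lambda>x. phi1 a b j x * eps_op (phi1 a b (k - 1)) x)
   - up_coeff a b k * integral {-1..1} (\<lambda>x. phi1 a b j x * eps_op (phi1 a b (Suc k)) x)
   = (if j = k then 1 else 0)"
proof -
  have int: "(\<lambda>x. phi1 a b j x * eps_op (phi1 a b l) x) integrable_on {-1..1}" for l
    by (intro integrable_mult_eps_op jacobi_dominated_phi1 integrable_phi1)
  have "(if j = k then 1 else 0) = integral {-1..1} (\<lambda>x. phi1 a b j x * ((1 - x\<^sup>2) * phi1 a b k x))"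
    by (simp add: integral_phi1_omega_phi1)
  also have "\<dots> = integral {-1..1}
      (\<lambda>x. down_coeff a b k * (phi1 a b j x * eps_op (phi1 a b (k - 1)) x)
      - up_coeff a b k * (phi1 a b j x * eps_op (phi1 a b (Suc k)) x))"
  proof (rule integral_cong)
    fix x :: real assume x: "x \<in> {-1..1}"
    show "phi1 a b j x * ((1 - x\<^sup>2) * phi1 a b k x)
        = down_coeff a b k * (phi1 a b j x * eps_op (phi1 a b (k - 1)) x)
          - up_coeff a b k * (phi1 a b j x * eps_op (phi1 a b (Suc k)) x)"
      unfolding eps_op_phi1_ladder[OF x, symmetric] by (simp add: algebra_simps)
  qed
  also have "\<dots> = down_coeff a b k
        * integral {-1..1} (\<lambda>x. phi1 a b j x * eps_op (phi1 a b (k - 1)) x)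
      - up_coeff a b k * integral {-1..1} (\<lambda>x. phi1 a b j x * eps_op (phi1 a b (Suc k)) x)"
    by (simp add: int integral_diff integrable_on_mult_right)
  finally show ?thesis ..
qed

lemma integral_phi1_eps_phi1_even:
  "integral {-1..1} (\<lambda>x. phi1 a b (2 * i) x * eps_op (phi1 a b (2 * l)) x) = 0"
proof -
  define A where "A i l = integral {-1..1} (\<lambda>x. phi1 a b (2 * i) x * eps_op (phi1 a b (2 * l)) x)"
    for i l
  have skew: "A l i = - A i l" for i l
    using M1_skew[of "2 * l" "2 * i"] by (simp add: M1_def A_def psi1_even)
  have step: "A i (Suc l) = 0" if "A i l = 0" for i l
  proof -
    have "2 * i \<noteq> 2 * l + 1" by presburger
    then have "up_coeff a b (2 * l + 1) * A i (Suc l) = down_coeff a b (2 * l + 1) * A i l"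
      using integral_phi1_eps_phi1_ladder[of "2 * l + 1" "2 * i"] by (simp add: A_def)
    then show ?thesis using that up_coeff_pos[of "2 * l + 1"] by simp
  qed
  have "A 0 l = 0" for l
  proof (induction l)
    case 0
    then show ?case using skew[of 0 0] by simp
  qed (rule step)
  then have "A i 0 = 0" for i
    using skew[of 0 i] by simp
  then have "A i l = 0"
    by (induction l) (auto intro: step)
  then show ?thesis unfolding A_def .
qed

lemma M1_even_odd: "M1 a b (2 * i) (Suc (2 * l)) = (if i = l then 1 else 0)"
proof -
  have "M1 a b (2 * i) (Suc (2 * l))
      = integral {-1..1} (\<lambda>x. phi1 a b (2 * i) x * ((1 - x\<^sup>2) * phi1 a b (2 * l) x))"
    unfolding M1_def by (intro integral_cong) (simp add: psi1_even eps_op_psi1_odd)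
  then show ?thesis by (simp add: integral_phi1_omega_phi1)
qed

lemma M1_odd_odd: "M1 a b (Suc (2 * i)) (Suc (2 * l)) = 0"
proof -
  have parity: "Suc (2 * i) \<noteq> 2 * l" by presburger
  have "M1 a b (Suc (2 * i)) (Suc (2 * l))
      = integral {-1..1}
          (\<lambda>x. down_coeff a b (2 * i) * (phi1 a b (2 * i - 1) x * ((1 - x\<^sup>2) * phi1 a b (2 * l) x))
          - up_coeff a b (2 * i) * (phi1 a b (Suc (2 * i)) x * ((1 - x\<^sup>2) * phi1 a b (2 * l) x)))"
    unfolding M1_def
  proof (rule integral_spike[of "{-1, 1}"])
    fix x :: real assume "x \<in> {-1..1} - {-1, 1}"
    then have x: "x \<in> {-1<..<1}" "x \<in> {-1..1}" by auto
    show "down_coeff a b (2 * i) * (phi1 a b (2 * i - 1) x * ((1 - x\<^sup>2) * phi1 a b (2 * l) x))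
          - up_coeff a b (2 * i) * (phi1 a b (Suc (2 * i)) x * ((1 - x\<^sup>2) * phi1 a b (2 * l) x))
        = psi1 a b (Suc (2 * i)) x * eps_op (psi1 a b (Suc (2 * l))) x"
      unfolding psi1_odd[OF x(1)] eps_op_psi1_odd[OF x(2)] by (simp add: algebra_simps)
  qed simp
  also have "\<dots> = down_coeff a b (2 * i) * (if 2 * i - 1 = 2 * l then 1 else 0)"
    using parity by (simp add: integral_diff integrable_on_mult_right integrable_phi1_omega_phi1
        integral_phi1_omega_phi1)
  also have "\<dots> = 0"
    by (cases "i = 0") (simp_all add: down_coeff_0, presburger)
  finally show ?thesis .
qed

lemma M1_eq_symplectic_J: "M1 a b j k = symplectic_J j k"
proof -
  obtain i l where j: "j = 2 * i \<or> j = Suc (2 * i)" and k: "k = 2 * l \<or> k = Suc (2 * l)"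
    by (metis evenE oddE Suc_eq_plus1)
  have parity: "2 * l \<noteq> Suc (2 * i)" "Suc (2 * l) \<noteq> 2 * i" by presburger+
  have even_even: "M1 a b (2 * i) (2 * l) = 0"
    unfolding M1_def using integral_phi1_eps_phi1_even by (simp add: psi1_even)
  have odd_even: "M1 a b (Suc (2 * i)) (2 * l) = (if i = l then -1 else 0)"
    using M1_skew[of "Suc (2 * i)" "2 * l"] by (simp add: M1_even_odd)
  from j k show ?thesis
    by (elim disjE)
       (simp_all add: symplectic_J_def parity even_even odd_even M1_even_odd M1_odd_odd)
qed

text \<open>With \<open>g i = down_coeff (2 i) (eps_op phi_(2 i))(x) phi_(2 i - 1)(y)\<close>, the \<open>i\<close>-th pair of
  terms of \<open>K - S\<close> is \<open>g (i + 1) - g i\<close>, so the difference telescopes to its last term.\<close>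

lemma K1_symplectic_J:
  assumes N: "N = 2 * m" and "m \<ge> 1" and x: "x \<in> {-1<..<1}" and y: "y \<in> {-1<..<1}"
  shows "K1 a b N (\<lambda>j k. - symplectic_J j k) x y
       = S1 a b N x y + C1 a b N * eps_op (phi1 a b N) x * phi1 a b (N - 1) y"
proof -
  have x': "x \<in> {-1..1}" using x by auto
  define e where "e j = eps_op (phi1 a b j) x" for j
  define g where "g i = down_coeff a b (2 * i) * e (2 * i) * phi1 a b (2 * i - 1) y" for i
  have "K1 a b N (\<lambda>j k. - symplectic_J j k) x y
      = (\<Sum>j<N. eps_op (psi1 a b j) x * - (\<Sum>k<N. symplectic_J j k * psi1 a b k y))"
    unfolding K1_def by (simp add: sum_distrib_left sum_negf algebra_simps)
  also have "\<dots> = (\<Sum>j<N. eps_op (psi1 a b j) x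
      * (if even j then - psi1 a b (Suc j) y else psi1 a b (j - 1) y))"
    using N by (intro sum.cong) (auto simp: sum_symplectic_J_row)
  also have "\<dots> = (\<Sum>i<m. (1 - x\<^sup>2) * phi1 a b (2 * i) x * phi1 a b (2 * i) y
      - e (2 * i) * psi1 a b (Suc (2 * i)) y)"
    unfolding N sum_lessThan_pairs
    by (intro sum.cong) (simp_all add: e_def psi1_even eps_op_psi1_odd[OF x'])
  finally have K: "K1 a b N (\<lambda>j k. - symplectic_J j k) x y = \<dots>" .
  have S: "S1 a b N x y = (\<Sum>i<m. (1 - x\<^sup>2) * phi1 a b (2 * i) x * phi1 a b (2 * i) y
      + (1 - x\<^sup>2) * phi1 a b (Suc (2 * i)) x * phi1 a b (Suc (2 * i)) y)"
    unfolding S1_def N sum_lessThan_pairs ..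
  have step:
    "((1 - x\<^sup>2) * phi1 a b (2 * i) x * phi1 a b (2 * i) y - e (2 * i) * psi1 a b (Suc (2 * i)) y)
      - ((1 - x\<^sup>2) * phi1 a b (2 * i) x * phi1 a b (2 * i) y
         + (1 - x\<^sup>2) * phi1 a b (Suc (2 * i)) x * phi1 a b (Suc (2 * i)) y)
      = g (Suc i) - g i" for i
  proof -
    have omega: "(1 - x\<^sup>2) * phi1 a b (Suc (2 * i)) x = up_coeff a b (2 * i) * e (2 * i)
        - down_coeff a b (Suc (Suc (2 * i))) * e (Suc (Suc (2 * i)))"
      using eps_op_phi1_ladder[OF x', of "Suc (2 * i)"] by (simp add: e_def down_coeff_Suc)
    then show ?thesis
      unfolding omega psi1_odd[OF y] g_def by (simp add: algebra_simps)
  qed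
  have "K1 a b N (\<lambda>j k. - symplectic_J j k) x y - S1 a b N x y = g m - g 0"
    unfolding K S sum_subtractf[symmetric] step by (rule sum_lessThan_telescope)
  moreover have "g 0 = 0" by (simp add: g_def down_coeff_0)
  moreover have "g m = C1 a b N * eps_op (phi1 a b N) x * phi1 a b (N - 1) y"
    using up_coeff_eq_C1[of N] down_coeff_Suc[of "N - 1"] N \<open>m \<ge> 1\<close>
    by (simp add: g_def e_def)
  ultimately show ?thesis by simp
qed

end

theorem lemma3:
  fixes a b :: real and N :: nat
  assumes "a > -2" and "b > -2" and "N \<ge> 2" and "even N"
  shows "(\<exists>\<nu>. is_inverse_mat N (M1 a b) \<nu>) \<and>
         (\<forall>\<nu>. is_inverse_mat N (M1 a b) \<nu> \<longrightarrow>
            (\<forall>x\<in>{-1<..<1}. \<forall>y\<in>{-1<..<1}.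
               K1 a b N \<nu> x y
                 = S1 a b N x y + C1 a b N * eps_op (phi1 a b N) x * phi1 a b (N - 1) y))"
proof -
  obtain m where N: "N = 2 * m" using \<open>even N\<close> by blast
  have M: "M1 a b = symplectic_J"
    using M1_eq_symplectic_J[OF assms(1,2)] by blast
  have inv: "is_inverse_mat N (M1 a b) (\<lambda>j k. - symplectic_J j k)"
    unfolding M using \<open>even N\<close> by (rule is_inverse_mat_symplectic_J)
  have "K1 a b N \<nu> x y = S1 a b N x y + C1 a b N * eps_op (phi1 a b N) x * phi1 a b (N - 1) y"
    if \<nu>: "is_inverse_mat N (M1 a b) \<nu>" and xy: "x \<in> {-1<..<1}" "y \<in> {-1<..<1}" for \<nu> x y
  proof -
    have "K1 a b N \<nu> x y = K1 a b N (\<lambda>j k. - symplectic_J j k) x y"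
      unfolding K1_def using is_inverse_mat_unique[OF \<nu> inv] by (intro sum.cong) auto
    also have "\<dots> = S1 a b N x y + C1 a b N * eps_op (phi1 a b N) x * phi1 a b (N - 1) y"
      using \<open>N \<ge> 2\<close> N by (intro K1_symplectic_J[OF assms(1,2) N _ xy]) simp
    finally show ?thesis .
  qed
  with inv show ?thesis by blast
qed

end
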